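(* The ordered $(n-1)$-complex $\mathfrak X=\bigcup_{\alpha\in\mathfrak I}\mathfrak X_\alpha\subset\mathbb R^{n-1}$ is a $\Lambda$-complex for $\Lambda:=\mathbb Z^r\times N_1\mathbb Z\times\cdots\times N_{r_2}\mathbb Z$. Moreover: (i) $\mathrm{Vt}(\mathfrak X_\alpha)\subset\mathbb Z^{n-1}$ for all $\alpha$; (ii) $|\mathfrak I|=(n-1)!\prod_{j=1}^{r_2}N_j$; (iii) for every $1\le j\le r_2$ and $\alpha\in\mathfrak I$ there is $\alpha_j\in\mathbb R$ such that $\alpha_j\le\Omega_j(\kappa)\le\alpha_j+1$ for all $\kappa\in\mathfrak X_\alpha$, where $$\Omega_j(\kappa):=\kappa[r+j]+\frac{N_j}{2\pi}\sum_{\ell=1}^r\kappa[\ell]\arg(\varepsilon_\ell^{(r_1+j)}),\qquad\kappa=(\kappa[1],\dots,\kappa[n-1]).$$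
   Context: Number field setup: $k$ is a number field of degree $n=r_1+2r_2$ with real embeddings $\tau_1,\dots,\tau_{r_1}$ and complex embeddings $\tau_{r_1+1},\dots,\tau_{r_1+r_2}$ (one from each conjugate pair); $\gamma^{(i)}:=\tau_i(\gamma)$. Let $r=r_1+r_2-1$, let $\varepsilon_1,\dots,\varepsilon_r$ be multiplicatively independent totally positive units of $k$, and fix integers $N_j\ge 3$ ($1\le j\le r_2$). $\arg$ takes values in $(-\pi,\pi]$. Ordered complexes: an ordered $p$-complex in a $p$-dimensional real vector space $V$ is a family $X=\bigcup_{\alpha\in\mathfrak I}X_\alpha$ of $p$-simplices $X_\alpha\subset V$ (vertex set $\mathrm{Vt}(X_\alpha)$), each with a total order $\prec_\alpha$ on $\mathrm{Vt}(X_\alpha)$; $[s_1,\dots,s_t]$ denotes a convex hull. For $x$ in a simplex $S$, $\mathrm{SpVt}(x)$ is the set of vertices of $S$ with positive barycentric coordinate in $x$. $\Lambda$-complex: $X$ is a $\Lambda$-complex if (i) for all $\alpha,\beta$, $X_\alpha\cap X_\beta$ is empty or equals the convex hull of $\mathrm{Vt}(X_\alpha)\cap\mathrm{Vt}(X_\beta)$; (ii) for $v,w\in\mathrm{Vt}(X_\alpha)\cap\mathrm{Vt}(X_\beta)$, $v\prec_\alpha w\iff v\prec_\beta w$; (iii) if $v,w\in\mathrm{Vt}(X_\alpha)$, $\lambda\in\Lambda$ and $v+\lambda,w+\lambda\in\mathrm{Vt}(X_{\alpha'})$, then $v\prec_\alpha w\iff v+\lambda\prec_{\alpha'}w+\lambda$;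 (iv) the quotient map $V\to V/\Lambda$ restricted to $X$ is surjective and is injective on the union of the interiors of the $X_\alpha$; (v) if $x,x'\in X$, $\lambda\in\Lambda$, $x'=x+\lambda$, then $\mathrm{SpVt}(x')=\mathrm{SpVt}(x)+\lambda$. Construction $Y(X,\omega,[M_1,M_2])$: given an ordered $p$-complex $X$, linear $\omega:V\to\mathbb R$, integers $M_1<M_2$: let $A:V\to(0,1]$ with $A(u)-\omega(u)\in\mathbb Z$, $a(u):=A(u)-\omega(u)$; order $\prec_\alpha^A$: $u\prec_\alpha^A u'$ iff $A(u)<A(u')$, or $A(u)=A(u')$ and $u\prec_\alpha u'$. $J=\{(\alpha,v,\ell):v\in\mathrm{Vt}(X_\alpha),\ \ell\in\mathbb Z,\ M_1\le\ell<M_2\}$; for $\gamma=(\alpha,v,\ell)$, list $\mathrm{Vt}(X_\alpha)$ as $v_0\prec_\alpha^A\cdots\prec_\alpha^Av_p$, $v=v_j$, and $Y_\gamma=[v_0\times(a(v_0)+\ell),\dots,v_j\times(a(v_j)+\ell),v_j\times(a(v_j)+\ell-1),\dots,v_p\times(a(v_p)+\ell-1)]$, ordered by $\rho\prec_\gamma\rho'$ iff $\pi_V(\rho)\prec_\alpha\pi_V(\rho')$, or $\pi_V(\rho)=\pi_V(\rho')$ and $\pi_{\mathbb R}(\rho')<\pi_{\mathbb R}(\rho)$. $Y(X,\omega,[M_1,M_2])=\bigcup_{\gamma\in J}Y_\gamma$. The complex $\mathfrak X$: $X_0=\{0\}\subset\mathbb R^0$ (one simplex, one vertex). For $1\le j\le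 r$, $X_j=Y(X_{j-1},0,[0,1])\subset\mathbb R^j$. For $1\le j\le r_2$, $X_{r+j}=Y(X_{r+j-1},\omega_{r+j-1},[0,N_j])$ with $\omega_{r+j-1}(x)=\frac{N_j}{2\pi}\sum_{\ell=1}^r x[\ell]\arg(\varepsilon_\ell^{(r_1+j)})$. $\mathfrak X=\bigcup_{\alpha\in\mathfrak I}\mathfrak X_\alpha:=X_{n-1}\subset\mathbb R^{n-1}$. *)

theory Defs
  imports "HOL-Analysis.Analysis"
begin

text \<open>Points of R^p are represented as functions nat => real that vanish at all
  indices >= p (coordinate x[i] of the paper is x (i-1)).  An ordered simplex is a
  list of its vertices, listed in increasing order of its vertex order; an ordered
  complex is a list of ordered simplices (the index set is the set of list positions).\<close>

type_synonym pt = "nat \<Rightarrow> real"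

definition in_space :: "nat \<Rightarrow> pt \<Rightarrow> bool" where
  "in_space p x \<longleftrightarrow> (\<forall>i\<ge>p. x i = 0)"

definition padd :: "pt \<Rightarrow> pt \<Rightarrow> pt" where
  "padd x y = (\<lambda>i. x i + y i)"

definition psub :: "pt \<Rightarrow> pt \<Rightarrow> pt" where
  "psub x y = (\<lambda>i. x i - y i)"

definition comb :: "(pt \<Rightarrow> real) \<Rightarrow> pt set \<Rightarrow> pt" where
  "comb c S = (\<lambda>i. \<Sum>v\<in>S. c v * v i)"

definition chull :: "pt set \<Rightarrow> pt set" where
  "chull S = {x. \<exists>c. (\<forall>v\<in>S. 0 \<le> c v) \<and> sum c S = 1 \<and> x = comb c S}"

definition open_simplex :: "pt set \<Rightarrow> pt set" where
  "open_simplex S = {x. \<exists>c. (\<forall>v\<in>S. 0 < c v) \<and> sum c S = 1 \<and> x = comb c S}"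

definition aff_indep :: "pt set \<Rightarrow> bool" where
  "aff_indep S \<longleftrightarrow> (\<forall>c. sum c S = 0 \<and> comb c S = (\<lambda>_. 0) \<longrightarrow> (\<forall>v\<in>S. c v = 0))"

definition SpVt :: "pt list \<Rightarrow> pt \<Rightarrow> pt set" where
  "SpVt \<alpha> x = {v \<in> set \<alpha>. \<exists>c. (\<forall>u\<in>set \<alpha>. 0 \<le> c u) \<and> sum c (set \<alpha>) = 1
                              \<and> x = comb c (set \<alpha>) \<and> 0 < c v}"

definition pos :: "'a list \<Rightarrow> 'a \<Rightarrow> nat" where
  "pos xs x = length (takeWhile (\<lambda>y. y \<noteq> x) xs)"

definition prec :: "pt list \<Rightarrow> pt \<Rightarrow> pt \<Rightarrow> bool" where
  "prec \<alpha> v w \<longleftrightarrow> pos \<alpha> v < pos \<alpha> w"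

definition ordered_complex :: "nat \<Rightarrow> pt list list \<Rightarrow> bool" where
  "ordered_complex p X \<longleftrightarrow>
     (\<forall>\<alpha>\<in>set X. distinct \<alpha> \<and> length \<alpha> = p + 1 \<and> (\<forall>v\<in>set \<alpha>. in_space p v)
                 \<and> aff_indep (set \<alpha>))"

definition Lambda_complex :: "nat \<Rightarrow> (pt \<Rightarrow> bool) \<Rightarrow> pt list list \<Rightarrow> bool" where
  "Lambda_complex p Lam X \<longleftrightarrow>
     ordered_complex p X \<and>
     \<comment> \<open>(i)\<close>
     (\<forall>\<alpha>\<in>set X. \<forall>\<beta>\<in>set X. chull (set \<alpha>) \<inter> chull (set \<beta>) = {} \<or>
          chull (set \<alpha>) \<inter> chull (set \<beta>) = chull (set \<alpha> \<inter> set \<beta>)) \<and>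
     \<comment> \<open>(ii)\<close>
     (\<forall>\<alpha>\<in>set X. \<forall>\<beta>\<in>set X. \<forall>v\<in>set \<alpha> \<inter> set \<beta>. \<forall>w\<in>set \<alpha> \<inter> set \<beta>.
          prec \<alpha> v w \<longleftrightarrow> prec \<beta> v w) \<and>
     \<comment> \<open>(iii)\<close>
     (\<forall>\<alpha>\<in>set X. \<forall>\<alpha>'\<in>set X. \<forall>v\<in>set \<alpha>. \<forall>w\<in>set \<alpha>. \<forall>t. Lam t \<longrightarrow>
          padd v t \<in> set \<alpha>' \<longrightarrow> padd w t \<in> set \<alpha>' \<longrightarrow>
          (prec \<alpha> v w \<longleftrightarrow> prec \<alpha>' (padd v t) (padd w t))) \<and>
     \<comment> \<open>(iv) surjectivity of V -> V/Lambda on X\<close>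
     (\<forall>y. in_space p y \<longrightarrow> (\<exists>\<alpha>\<in>set X. \<exists>x\<in>chull (set \<alpha>). Lam (psub y x))) \<and>
     \<comment> \<open>(iv) injectivity on the union of the interiors\<close>
     (\<forall>\<alpha>\<in>set X. \<forall>\<beta>\<in>set X. \<forall>x\<in>open_simplex (set \<alpha>). \<forall>y\<in>open_simplex (set \<beta>).
          Lam (psub x y) \<longrightarrow> x = y) \<and>
     \<comment> \<open>(v)\<close>
     (\<forall>\<alpha>\<in>set X. \<forall>\<alpha>'\<in>set X. \<forall>x\<in>chull (set \<alpha>). \<forall>x'\<in>chull (set \<alpha>'). \<forall>t.
          Lam t \<longrightarrow> x' = padd x t \<longrightarrow> SpVt \<alpha>' x' = (\<lambda>v. padd v t) ` SpVt \<alpha> x)"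

text \<open>The construction Y(X, omega, [M1,M2]) for an ordered p-complex X (new coordinate has index p).\<close>
definition Afun :: "(pt \<Rightarrow> real) \<Rightarrow> pt \<Rightarrow> real" where
  "Afun \<omega> u = \<omega> u - of_int \<lceil>\<omega> u\<rceil> + 1"   \<comment> \<open>the unique value in (0,1] congruent to omega u mod Z\<close>

definition afun :: "(pt \<Rightarrow> real) \<Rightarrow> pt \<Rightarrow> real" where
  "afun \<omega> u = Afun \<omega> u - \<omega> u"

definition precA :: "(pt \<Rightarrow> real) \<Rightarrow> pt list \<Rightarrow> pt \<Rightarrow> pt \<Rightarrow> bool" where
  "precA \<omega> \<alpha> u u' \<longleftrightarrow> Afun \<omega> u < Afun \<omega> u' \<or> (Afun \<omega> u = Afun \<omega> u' \<and> prec \<alpha> u u')"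

definition rankA :: "(pt \<Rightarrow> real) \<Rightarrow> pt list \<Rightarrow> pt \<Rightarrow> nat" where
  "rankA \<omega> \<alpha> u = card {w \<in> set \<alpha>. precA \<omega> \<alpha> w u}"

definition ext :: "nat \<Rightarrow> pt \<Rightarrow> real \<Rightarrow> pt" where
  "ext p x t = x(p := t)"

text \<open>Y_gamma for gamma = (alpha, v, l), listed in the order \<prec>_gamma\<close>
definition Ysimp :: "nat \<Rightarrow> (pt \<Rightarrow> real) \<Rightarrow> pt list \<Rightarrow> pt \<Rightarrow> int \<Rightarrow> pt list" where
  "Ysimp p \<omega> \<alpha> v l =
     concat (map (\<lambda>u.
        (if rankA \<omega> \<alpha> u \<le> rankA \<omega> \<alpha> v then [ext p u (afun \<omega> u + of_int l)] else []) @
        (if rankA \<omega> \<alpha> v \<le> rankA \<omega> \<alpha> u then [ext p u (afun \<omega> u + of_int l - 1)] else [])) \<alpha>)"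

definition Ycx :: "nat \<Rightarrow> pt list list \<Rightarrow> (pt \<Rightarrow> real) \<Rightarrow> int \<Rightarrow> int \<Rightarrow> pt list list" where
  "Ycx p X \<omega> M1 M2 =
     concat (map (\<lambda>\<alpha>. concat (map (\<lambda>v. map (\<lambda>l. Ysimp p \<omega> \<alpha> v l) [M1..M2 - 1]) \<alpha>)) X)"

text \<open>e l j stands for eps_l^(r1+j) (1 \<le> l \<le> r, 1 \<le> j \<le> r2).\<close>
definition omega_fn :: "nat \<Rightarrow> (nat \<Rightarrow> nat) \<Rightarrow> (nat \<Rightarrow> nat \<Rightarrow> complex) \<Rightarrow> nat \<Rightarrow> pt \<Rightarrow> real" where
  "omega_fn r N e j x = real (N j) / (2 * pi) * (\<Sum>l=1..r. x (l - 1) * Arg (e l j))"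

fun Xc :: "nat \<Rightarrow> (nat \<Rightarrow> nat) \<Rightarrow> (nat \<Rightarrow> nat \<Rightarrow> complex) \<Rightarrow> nat \<Rightarrow> pt list list" where
  "Xc r N e 0 = [[(\<lambda>_. 0)]]"
| "Xc r N e (Suc j) =
     (if j < r then Ycx j (Xc r N e j) (\<lambda>_. 0) 0 1
      else Ycx j (Xc r N e j) (omega_fn r N e (j - r + 1)) 0 (int (N (j - r + 1))))"

definition Xfrak :: "nat \<Rightarrow> nat \<Rightarrow> (nat \<Rightarrow> nat) \<Rightarrow> (nat \<Rightarrow> nat \<Rightarrow> complex) \<Rightarrow> pt list list" where
  "Xfrak r1 r2 N e = Xc (r1 + r2 - 1) N e (r1 + 2 * r2 - 1)"

definition LamK :: "nat \<Rightarrow> nat \<Rightarrow> (nat \<Rightarrow> nat) \<Rightarrow> pt \<Rightarrow> bool" where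
  "LamK r r2 N x \<longleftrightarrow> (\<forall>i<r. x i \<in> \<int>) \<and>
      (\<forall>j\<in>{1..r2}. \<exists>m::int. x (r + j - 1) = real (N j) * of_int m) \<and>
      (\<forall>i\<ge>r + r2. x i = 0)"

definition Omega :: "nat \<Rightarrow> (nat \<Rightarrow> nat) \<Rightarrow> (nat \<Rightarrow> nat \<Rightarrow> complex) \<Rightarrow> nat \<Rightarrow> pt \<Rightarrow> real" where
  "Omega r N e j \<kappa> = \<kappa> (r + j - 1) + real (N j) / (2 * pi) * (\<Sum>l=1..r. \<kappa> (l - 1) * Arg (e l j))"

end

theory Submission
  imports Defs
begin

text \<open>Each step of the construction replaces a simplex \<alpha> of a \<Lambda>-complex in R^p by the
  simplices Y_(\<alpha>,v,l) that cut the prism \<alpha> \<times> R along the levels of \<omega>: a point y of the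
  prism lies in Y_(\<alpha>,v,l) when y[p] minus the barycentric average of the offsets a(u) lies in
  [l - 1, l], and v is the vertex at which the cumulative \<prec>^A-weight of the base coordinates
  reaches the fractional part. The support vertices of such a point are therefore determined by
  three data that transform covariantly under the lattice: the barycentric coordinates of its
  base point, the height y[p] + \<omega>(base point), and the vertex order of \<alpha>. Hence conditions
  (i)-(v) pass from X to Y(X, \<omega>, [M1, M2]) with the lattice \<Lambda> \<times> (M2 - M1)Z, and induction
  over the n - 1 steps yields the \<Lambda>-complex. Integrality and the simplex count follow step by
  step; for the last claim, step r + j - 1 cuts along the levels of \<Omega>_j, which no later step
  changes.\<close>

definition linear_form :: "nat \<Rightarrow> (pt \<Rightarrow> real) \<Rightarrow> bool" where
  "linear_form p \<omega> \<longleftrightarrow> (\<exists>w. \<forall>x. \<omega> x = (\<Sum>i<p. w i * x i))"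

lemma linear_form_comb: assumes "linear_form p \<omega>" shows "\<omega> (comb c S) = (\<Sum>v\<in>S. c v * \<omega> v)"
proof -
  obtain w where w: "\<forall>x. \<omega> x = (\<Sum>i<p. w i * x i)" using assms unfolding linear_form_def by blast
  have "\<omega> (comb c S) = (\<Sum>i<p. w i * (\<Sum>v\<in>S. c v * v i))" by (simp add: w comb_def)
  also have "\<dots> = (\<Sum>i<p. \<Sum>v\<in>S. c v * (w i * v i))"
    by (simp add: sum_distrib_left mult.assoc mult.left_commute)
  also have "\<dots> = (\<Sum>v\<in>S. c v * (\<Sum>i<p. w i * v i))" by (subst sum.swap) (simp add: sum_distrib_left)
  finally show ?thesis by (simp add: w)
qed

lemma linear_form_padd: "linear_form p \<omega> \<Longrightarrow> \<omega> (padd x y) = \<omega> x + \<omega> y"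
  unfolding linear_form_def padd_def by (auto simp: distrib_left sum.distrib)

lemma linear_form_fun_upd: "linear_form p \<omega> \<Longrightarrow> p \<le> q \<Longrightarrow> \<omega> (x(q:=h)) = \<omega> x"
  unfolding linear_form_def by auto

lemma linear_form_zero: "linear_form p (\<lambda>_. 0)"
  unfolding linear_form_def by (rule exI[of _ "\<lambda>_. 0"]) simp

lemma comb_diff: "comb (\<lambda>v. c v - d v) S = (\<lambda>i. comb c S i - comb d S i)"
  by (simp add: comb_def fun_eq_iff left_diff_distrib sum_subtractf)

lemma aff_indep_coeffs_unique:
  assumes "aff_indep S" "sum c S = sum d S" "comb c S = comb d S" "v \<in> S"
  shows "c v = d v"
proof -
  have "sum (\<lambda>v. c v - d v) S = 0" using assms(2) by (simp add: sum_subtractf)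
  moreover have "comb (\<lambda>v. c v - d v) S = (\<lambda>_. 0)" using assms(3) by (simp add: comb_diff)
  ultimately have "\<forall>v\<in>S. c v - d v = 0" using assms(1) unfolding aff_indep_def by blast
  thus ?thesis using assms(4) by simp
qed

lemma SpVt_eq_support:
  assumes "aff_indep (set \<alpha>)" "\<forall>u\<in>set \<alpha>. 0 \<le> c u" "sum c (set \<alpha>) = 1" "x = comb c (set \<alpha>)"
  shows "SpVt \<alpha> x = {v\<in>set \<alpha>. 0 < c v}"
proof -
  have *: "d v = c v" if v: "v \<in> set \<alpha>" and d: "sum d (set \<alpha>) = 1" "x = comb d (set \<alpha>)" for v d
    using aff_indep_coeffs_unique[OF assms(1), of d c v] d assms v by simp
  show ?thesis
  proof (rule set_eqI, rule iffI)
    fix v assume "v \<in> SpVt \<alpha> x"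
    then obtain d where "v\<in>set \<alpha>" "sum d (set \<alpha>) = 1" "x = comb d (set \<alpha>)" "0 < d v"
      unfolding SpVt_def by blast
    with * show "v \<in> {v\<in>set \<alpha>. 0 < c v}" by auto
  next
    fix v assume "v \<in> {v\<in>set \<alpha>. 0 < c v}" thus "v \<in> SpVt \<alpha> x"
      unfolding SpVt_def using assms by blast
  qed
qed

lemma comb_mono_neutral:
  assumes "finite S" "T \<subseteq> S" "\<forall>v\<in>S - T. c v = 0"
  shows "comb c S = comb c T"
  unfolding comb_def fun_eq_iff
proof
  fix i show "(\<Sum>v\<in>S. c v * v i) = (\<Sum>v\<in>T. c v * v i)"
    by (rule sum.mono_neutral_right) (use assms in auto)
qed

lemma chull_mono:
  assumes "finite S" "T \<subseteq> S" shows "chull T \<subseteq> chull S"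
proof
  fix x assume "x \<in> chull T"
  then obtain c where c: "\<forall>v\<in>T. 0 \<le> c v" "sum c T = 1" "x = comb c T" unfolding chull_def by blast
  define d where "d v = (if v \<in> T then c v else 0)" for v
  have dT: "d v = c v" if "v \<in> T" for v using that by (simp add: d_def)
  have "sum d S = sum d T" by (rule sum.mono_neutral_right) (use assms in \<open>auto simp: d_def\<close>)
  also have "\<dots> = sum c T" by (rule sum.cong) (auto simp: dT)
  finally have s: "sum d S = 1" using c by simp
  have "comb d S = comb d T" using assms by (intro comb_mono_neutral) (auto simp: d_def)
  also have "comb d T = comb c T" unfolding comb_def fun_eq_iff by (auto intro!: sum.cong simp: dT)
  finally have "x = comb d S" using c by simp
  moreover have "\<forall>v\<in>S. 0 \<le> d v" using c by (simp add: d_def)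
  ultimately show "x \<in> chull S" unfolding chull_def using s by blast
qed

lemma in_chull_support:
  assumes "finite S" "\<forall>v\<in>S. 0 \<le> c v" "sum c S = 1" "x = comb c S"
  shows "x \<in> chull {v\<in>S. 0 < c v}"
proof -
  have z: "\<forall>v\<in>S - {v\<in>S. 0 < c v}. c v = 0" using assms(2) by force
  have "sum c S = sum c {v\<in>S. 0 < c v}"
    by (rule sum.mono_neutral_right[OF assms(1) _ z]) blast
  hence s1: "sum c {v\<in>S. 0 < c v} = 1" using assms(3) by simp
  have "comb c S = comb c {v\<in>S. 0 < c v}" by (rule comb_mono_neutral[OF assms(1) _ z]) blast
  hence x1: "x = comb c {v\<in>S. 0 < c v}" using assms(4) by simp
  have "\<forall>v\<in>{v\<in>S. 0 < c v}. 0 \<le> c v" by simp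
  thus ?thesis unfolding chull_def using s1 x1 by blast
qed

lemma chull_Int_eq_if_SpVt_eq:
  assumes "aff_indep (set a)" "aff_indep (set b)"
    and sp: "\<And>y. y \<in> chull (set a) \<Longrightarrow> y \<in> chull (set b) \<Longrightarrow> SpVt a y = SpVt b y"
  shows "chull (set a) \<inter> chull (set b) = {} \<or> chull (set a) \<inter> chull (set b) = chull (set a \<inter> set b)"
proof -
  have "chull (set a) \<inter> chull (set b) \<subseteq> chull (set a \<inter> set b)"
  proof
    fix y assume y: "y \<in> chull (set a) \<inter> chull (set b)"
    then obtain c where c: "\<forall>v\<in>set a. 0 \<le> c v" "sum c (set a) = 1" "y = comb c (set a)"
      unfolding chull_def by blast
    have e1: "SpVt a y = {v\<in>set a. 0 < c v}" using SpVt_eq_support[OF assms(1) c] .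
    have "SpVt b y \<subseteq> set b" unfolding SpVt_def by blast
    hence "SpVt a y \<subseteq> set b" using sp[of y] y by simp
    hence sub: "{v\<in>set a. 0 < c v} \<subseteq> set a \<inter> set b" using e1 by auto
    have "y \<in> chull {v\<in>set a. 0 < c v}" using in_chull_support[OF _ c] by simp
    thus "y \<in> chull (set a \<inter> set b)" using chull_mono[OF _ sub] by auto
  qed
  moreover have "chull (set a \<inter> set b) \<subseteq> chull (set a) \<inter> chull (set b)"
    using chull_mono[of "set a" "set a \<inter> set b"] chull_mono[of "set b" "set a \<inter> set b"] by auto
  ultimately show ?thesis by blast
qed

lemma pos_Cons: "pos (a#xs) x = (if a = x then 0 else Suc (pos xs x))"
  by (simp add: pos_def)

lemma pos_less_length: "x \<in> set xs \<Longrightarrow> pos xs x < length xs"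
  by (induction xs) (auto simp: pos_Cons)

lemma pos_inj: "x \<in> set xs \<Longrightarrow> y \<in> set xs \<Longrightarrow> pos xs x = pos xs y \<Longrightarrow> x = y"
  by (induction xs) (auto simp: pos_Cons split: if_splits)

lemma pos_append: "pos (xs @ ys) x = (if x \<in> set xs then pos xs x else length xs + pos ys x)"
  by (induction xs) (auto simp: pos_Cons)

lemma prec_irrefl: "\<not> prec \<alpha> u u" by (simp add: prec_def)
lemma prec_trans: "prec \<alpha> u v \<Longrightarrow> prec \<alpha> v w \<Longrightarrow> prec \<alpha> u w" by (simp add: prec_def)
lemma prec_total: "u \<in> set \<alpha> \<Longrightarrow> v \<in> set \<alpha> \<Longrightarrow> u \<noteq> v \<Longrightarrow> prec \<alpha> u v \<or> prec \<alpha> v u"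
  unfolding prec_def using pos_inj[of u \<alpha> v] by linarith
lemma prec_asym: "prec \<alpha> u v \<Longrightarrow> \<not> prec \<alpha> v u" by (simp add: prec_def)

lemma precA_irrefl: "\<not> precA \<omega> \<alpha> u u" by (simp add: precA_def prec_irrefl)
lemma precA_trans: "precA \<omega> \<alpha> u v \<Longrightarrow> precA \<omega> \<alpha> v w \<Longrightarrow> precA \<omega> \<alpha> u w"
  unfolding precA_def using prec_trans by fastforce
lemma precA_asym: "precA \<omega> \<alpha> u v \<Longrightarrow> \<not> precA \<omega> \<alpha> v u"
  unfolding precA_def using prec_asym by fastforce
lemma precA_total: "u \<in> set \<alpha> \<Longrightarrow> v \<in> set \<alpha> \<Longrightarrow> u \<noteq> v \<Longrightarrow> precA \<omega> \<alpha> u v \<or> precA \<omega> \<alpha> v u"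
  unfolding precA_def using prec_total[of u \<alpha> v] by linarith
lemma precA_imp_Afun_le: "precA \<omega> \<alpha> u v \<Longrightarrow> Afun \<omega> u \<le> Afun \<omega> v"
  unfolding precA_def by auto

lemma rankA_less: 
  assumes "u \<in> set \<alpha>" "v \<in> set \<alpha>" "precA \<omega> \<alpha> u v"
  shows "rankA \<omega> \<alpha> u < rankA \<omega> \<alpha> v"
proof -
  have "{w \<in> set \<alpha>. precA \<omega> \<alpha> w u} \<subset> {w \<in> set \<alpha>. precA \<omega> \<alpha> w v}"
    using assms precA_trans[of \<omega> \<alpha> _ u v] precA_irrefl[of \<omega> \<alpha> u] by blast
  thus ?thesis unfolding rankA_def by (intro psubset_card_mono) auto
qed

lemma rankA_le_iff:
  assumes "u \<in> set \<alpha>" "v \<in> set \<alpha>"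
  shows "rankA \<omega> \<alpha> u \<le> rankA \<omega> \<alpha> v \<longleftrightarrow> (u = v \<or> precA \<omega> \<alpha> u v)"
proof
  assume "rankA \<omega> \<alpha> u \<le> rankA \<omega> \<alpha> v"
  thus "u = v \<or> precA \<omega> \<alpha> u v"
    using rankA_less[OF assms(2,1), of \<omega>] precA_total[OF assms, of \<omega>] by fastforce
next
  assume "u = v \<or> precA \<omega> \<alpha> u v"
  thus "rankA \<omega> \<alpha> u \<le> rankA \<omega> \<alpha> v" using rankA_less[OF assms, of \<omega>] by fastforce
qed

lemma Afun_pos: "0 < Afun \<omega> u" unfolding Afun_def by linarith
lemma Afun_le_1: "Afun \<omega> u \<le> 1" unfolding Afun_def by linarith
lemma afun_eq_of_int: "afun \<omega> u = of_int (1 - \<lceil>\<omega> u\<rceil>)" unfolding afun_def Afun_def by simp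
lemma afun_Ints: "afun \<omega> u \<in> \<int>" unfolding afun_eq_of_int by simp
lemma Afun_eq_afun_plus: "Afun \<omega> u = afun \<omega> u + \<omega> u" unfolding afun_def by simp

lemma ext_same [simp]: "ext p u h p = h" by (simp add: ext_def)
lemma ext_other [simp]: "i \<noteq> p \<Longrightarrow> ext p u h i = u i" by (simp add: ext_def)
lemma ext_fun_upd_zero: "in_space p u \<Longrightarrow> (ext p u h)(p := 0) = u"
  unfolding ext_def in_space_def fun_eq_iff by auto
lemma ext_inj: "in_space p u \<Longrightarrow> in_space p u' \<Longrightarrow> ext p u h = ext p u' h' \<Longrightarrow> u = u' \<and> h = h'"
  by (metis ext_same ext_fun_upd_zero)

definition weight_upto :: "(pt \<Rightarrow> real) \<Rightarrow> pt list \<Rightarrow> (pt \<Rightarrow> real) \<Rightarrow> pt \<Rightarrow> real" where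
  "weight_upto \<omega> \<alpha> c u = (\<Sum>u'\<in>set \<alpha>. if u' = u \<or> precA \<omega> \<alpha> u' u then c u' else 0)"
definition weight_below :: "(pt \<Rightarrow> real) \<Rightarrow> pt list \<Rightarrow> (pt \<Rightarrow> real) \<Rightarrow> pt \<Rightarrow> real" where
  "weight_below \<omega> \<alpha> c u = (\<Sum>u'\<in>set \<alpha>. if precA \<omega> \<alpha> u' u then c u' else 0)"

lemma weight_upto_eq_plus_below: "u \<in> set \<alpha> \<Longrightarrow> weight_upto \<omega> \<alpha> c u = c u + weight_below \<omega> \<alpha> c u"
proof -
  assume u: "u \<in> set \<alpha>"
  have "weight_upto \<omega> \<alpha> c u = (\<Sum>u'\<in>set \<alpha>. (if u' = u then c u' else 0) + (if precA \<omega> \<alpha> u' u then c u' else 0))"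
    unfolding weight_upto_def by (rule sum.cong) (auto simp: precA_irrefl)
  also have "\<dots> = c u + weight_below \<omega> \<alpha> c u" using u unfolding weight_below_def sum.distrib by simp
  finally show ?thesis .
qed

lemma weight_below_nonneg: "\<forall>u\<in>set \<alpha>. 0 \<le> c u \<Longrightarrow> 0 \<le> weight_below \<omega> \<alpha> c u"
  unfolding weight_below_def by (rule sum_nonneg) auto

lemma weight_upto_le_sum: "\<forall>u\<in>set \<alpha>. 0 \<le> c u \<Longrightarrow> weight_upto \<omega> \<alpha> c u \<le> sum c (set \<alpha>)"
  unfolding weight_upto_def by (rule sum_mono) auto

lemma weight_upto_le_weight_below: assumes "\<forall>u\<in>set \<alpha>. 0 \<le> c u" "precA \<omega> \<alpha> u v"
  shows "weight_upto \<omega> \<alpha> c u \<le> weight_below \<omega> \<alpha> c v"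
  unfolding weight_upto_def weight_below_def
proof (rule sum_mono)
  fix u' assume "u' \<in> set \<alpha>"
  thus "(if u' = u \<or> precA \<omega> \<alpha> u' u then c u' else 0) \<le> (if precA \<omega> \<alpha> u' v then c u' else 0)"
    using assms precA_trans[of \<omega> \<alpha> u' u v] by auto
qed

lemma ex_precA_least:
  assumes "finite S" "S \<noteq> {}" "S \<subseteq> set \<alpha>"
  shows "\<exists>m\<in>S. \<forall>u\<in>S. u \<noteq> m \<longrightarrow> precA \<omega> \<alpha> m u"
proof -
  obtain m where m: "m \<in> S" "rankA \<omega> \<alpha> m = Min (rankA \<omega> \<alpha> ` S)"
    using Min_in[of "rankA \<omega> \<alpha> ` S"] assms(1,2) by fastforce
  have "rankA \<omega> \<alpha> m \<le> rankA \<omega> \<alpha> u" if "u \<in> S" for u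
    using m(2) assms(1) that by simp
  thus ?thesis using m(1) assms(3) rankA_le_iff by blast
qed

lemma ex_precA_greatest:
  assumes "finite S" "S \<noteq> {}" "S \<subseteq> set \<alpha>"
  shows "\<exists>m\<in>S. \<forall>u\<in>S. u \<noteq> m \<longrightarrow> precA \<omega> \<alpha> u m"
proof -
  obtain m where m: "m \<in> S" "rankA \<omega> \<alpha> m = Max (rankA \<omega> \<alpha> ` S)"
    using Max_in[of "rankA \<omega> \<alpha> ` S"] assms(1,2) by fastforce
  have "rankA \<omega> \<alpha> u \<le> rankA \<omega> \<alpha> m" if "u \<in> S" for u
    using m(2) assms(1) that by simp
  thus ?thesis using m(1) assms(3) rankA_le_iff by blast
qed

lemma weight_upto_greatest:
  assumes "\<forall>u\<in>set \<alpha>. u \<noteq> m \<longrightarrow> precA \<omega> \<alpha> u m"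
  shows "weight_upto \<omega> \<alpha> c m = sum c (set \<alpha>)"
  unfolding weight_upto_def using assms by (intro sum.cong) auto

lemma weight_below_eq_weight_upto_predecessor:
  assumes "precA \<omega> \<alpha> m v" "\<forall>u\<in>set \<alpha>. precA \<omega> \<alpha> u v \<longrightarrow> u = m \<or> precA \<omega> \<alpha> u m"
  shows "weight_below \<omega> \<alpha> c v = weight_upto \<omega> \<alpha> c m"
  unfolding weight_upto_def weight_below_def using assms precA_trans[of \<omega> \<alpha> _ m v]
  by (intro sum.cong) auto

text \<open>The pivot is the \<prec>^A-first vertex whose cumulative weight exceeds \<sigma>.\<close>

lemma ex_pivot:
  assumes c0: "\<forall>u\<in>set \<alpha>. 0 \<le> c u" and c1: "sum c (set \<alpha>) = 1" and \<sigma>: "0 \<le> \<sigma>" "\<sigma> < 1"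
  shows "\<exists>v\<in>set \<alpha>. weight_below \<omega> \<alpha> c v \<le> \<sigma> \<and> \<sigma> \<le> weight_upto \<omega> \<alpha> c v"
proof -
  define S where "S = {u\<in>set \<alpha>. \<sigma> < weight_upto \<omega> \<alpha> c u}"
  have "set \<alpha> \<noteq> {}" using c1 by auto
  then obtain m where "m \<in> set \<alpha>" "\<forall>u\<in>set \<alpha>. u \<noteq> m \<longrightarrow> precA \<omega> \<alpha> u m"
    using ex_precA_greatest[of "set \<alpha>" \<alpha> \<omega>] by auto
  hence "m \<in> S" using weight_upto_greatest[of \<alpha> m \<omega> c] c1 \<sigma>(2) unfolding S_def by simp
  moreover have "finite S" "S \<subseteq> set \<alpha>" unfolding S_def by auto
  ultimately obtain v where v: "v \<in> S" and least: "\<forall>u\<in>S. u \<noteq> v \<longrightarrow> precA \<omega> \<alpha> v u"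
    using ex_precA_least[of S \<alpha> \<omega>] by blast
  have "weight_below \<omega> \<alpha> c v \<le> \<sigma>"
  proof (cases "\<exists>u\<in>set \<alpha>. precA \<omega> \<alpha> u v")
    case False
    hence "weight_below \<omega> \<alpha> c v = 0" unfolding weight_below_def by (intro sum.neutral) auto
    thus ?thesis using \<sigma> by simp
  next
    case True
    hence "{u\<in>set \<alpha>. precA \<omega> \<alpha> u v} \<noteq> {}" by blast
    then obtain m where m: "m \<in> {u\<in>set \<alpha>. precA \<omega> \<alpha> u v}"
      and "\<forall>u\<in>{u\<in>set \<alpha>. precA \<omega> \<alpha> u v}. u \<noteq> m \<longrightarrow> precA \<omega> \<alpha> u m"
      using ex_precA_greatest[of "{u\<in>set \<alpha>. precA \<omega> \<alpha> u v}" \<alpha> \<omega>] by auto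
    hence "weight_below \<omega> \<alpha> c v = weight_upto \<omega> \<alpha> c m"
      using m by (intro weight_below_eq_weight_upto_predecessor) auto
    moreover have "m \<notin> S"
    proof
      assume "m \<in> S"
      hence "m = v \<or> precA \<omega> \<alpha> v m" using least by blast
      thus False using m precA_asym precA_irrefl by blast
    qed
    ultimately show ?thesis using m unfolding S_def by simp
  qed
  thus ?thesis using v unfolding S_def by auto
qed

text \<open>lift_support describes the support vertices of a point of Y_(\<alpha>,v,l) (lemma SpVt_Ysimp)
  through its base coordinates c in \<alpha> and its height z alone. frac_tie x b is the representative
  of x modulo 1 in [0, 1), except that it is 1 for integral x when b holds: ties between vertices
  with equal A are broken by the order of \<alpha>.\<close>

definition frac_tie :: "real \<Rightarrow> bool \<Rightarrow> real" where
  "frac_tie x b = (if x \<in> \<int> \<and> b then 1 else x - of_int \<lfloor>x\<rfloor>)"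

definition lift_threshold :: "(pt \<Rightarrow> real) \<Rightarrow> pt list \<Rightarrow> (pt \<Rightarrow> real) \<Rightarrow> real \<Rightarrow> pt \<Rightarrow> real" where
  "lift_threshold \<omega> \<alpha> c \<zeta> u = (\<Sum>u'\<in>set \<alpha>. c u' * (\<zeta> - frac_tie (\<zeta> - \<omega> u') (prec \<alpha> u u')))"

definition lift_support :: "nat \<Rightarrow> (pt \<Rightarrow> real) \<Rightarrow> pt list \<Rightarrow> (pt \<Rightarrow> real) \<Rightarrow> real \<Rightarrow> pt set" where
  "lift_support p \<omega> \<alpha> c z = {ext p u h | u h. u \<in> set \<alpha> \<and> 0 < c u \<and> h \<in> \<int> \<and>
      lift_threshold \<omega> \<alpha> c (h + \<omega> u) u - c u < z \<and> z < lift_threshold \<omega> \<alpha> c (h + \<omega> u) u + 1}"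

lemma frac_tie_shift: "frac_tie (x + of_int m) b = frac_tie x b"
proof -
  have "x + of_int m \<in> \<int> \<longleftrightarrow> x \<in> \<int>"
    by (metis Ints_add Ints_diff Ints_of_int add_diff_cancel_right')
  thus ?thesis unfolding frac_tie_def by simp
qed

lemma frac_tie_zero: "frac_tie 0 b = (if b then 1 else 0)" unfolding frac_tie_def by simp

lemma not_Ints_strictly_between_0_1: fixes d :: real assumes "0 < d" "d < 1" shows "d \<notin> \<int>"
proof
  assume "d \<in> \<int>" then obtain m where "d = of_int m" by (auto elim: Ints_cases)
  hence "0 < m" "m < 1" using assms by simp_all
  thus False by simp
qed

lemma frac_tie_pos: "0 < d \<Longrightarrow> d < 1 \<Longrightarrow> frac_tie d b = d"
  unfolding frac_tie_def using not_Ints_strictly_between_0_1[of d] by (simp add: floor_eq_iff)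

lemma frac_tie_neg: assumes "-1 < d" "d < 0" shows "frac_tie d b = d + 1"
proof -
  have "d + 1 \<notin> \<int>" using not_Ints_strictly_between_0_1[of "d+1"] assms by simp
  hence "d \<notin> \<int>" using Ints_add[OF _ Ints_1, of d] by blast
  moreover have "\<lfloor>d\<rfloor> = -1" using assms by (simp add: floor_eq_iff)
  ultimately show ?thesis unfolding frac_tie_def by simp
qed

lemma frac_tie_Afun:
  assumes u: "u \<in> set \<alpha>" and u': "u' \<in> set \<alpha>"
  shows "(Afun \<omega> u + of_int k) - frac_tie (Afun \<omega> u + of_int k - \<omega> u') (prec \<alpha> u u')
       = Afun \<omega> u' + of_int k - (if u' = u \<or> precA \<omega> \<alpha> u' u then 0 else 1)"
proof -
  define d where "d = Afun \<omega> u - Afun \<omega> u'"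
  have x: "Afun \<omega> u + of_int k - \<omega> u' = d + of_int (k + (1 - \<lceil>\<omega> u'\<rceil>))"
    unfolding d_def Afun_def by simp
  have D: "frac_tie (Afun \<omega> u + of_int k - \<omega> u') (prec \<alpha> u u') = frac_tie d (prec \<alpha> u u')"
    unfolding x frac_tie_shift ..
  have b: "-1 < d" "d < 1" unfolding d_def using Afun_pos[of \<omega>] Afun_le_1[of \<omega>] by smt+
  consider "d = 0" | "0 < d" | "d < 0" by linarith
  thus ?thesis
  proof cases
    case 1
    hence AA: "Afun \<omega> u = Afun \<omega> u'" unfolding d_def by simp
    show ?thesis
    proof (cases "u' = u")
      case True thus ?thesis using 1 D by (simp add: frac_tie_zero prec_irrefl)
    next
      case False
      have "prec \<alpha> u u' \<longleftrightarrow> \<not> prec \<alpha> u' u" using prec_total[OF u' u False] prec_asym by blast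
      thus ?thesis using 1 D AA False by (simp add: frac_tie_zero precA_def)
    qed
  next
    case 2
    hence "precA \<omega> \<alpha> u' u" unfolding d_def precA_def by simp
    thus ?thesis using 2 D b frac_tie_pos[of d] unfolding d_def by simp
  next
    case 3
    hence "\<not> precA \<omega> \<alpha> u' u" "u' \<noteq> u" unfolding d_def precA_def by auto
    thus ?thesis using 3 D b frac_tie_neg[of d] unfolding d_def by simp
  qed
qed

lemma lift_threshold_at_Afun:
  assumes u: "u \<in> set \<alpha>"
  shows "lift_threshold \<omega> \<alpha> c (Afun \<omega> u + of_int k) u =
     (\<Sum>u'\<in>set \<alpha>. c u' * Afun \<omega> u') + of_int k * sum c (set \<alpha>) - sum c (set \<alpha>) + weight_upto \<omega> \<alpha> c u"
proof -
  have "lift_threshold \<omega> \<alpha> c (Afun \<omega> u + of_int k) u =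
     (\<Sum>u'\<in>set \<alpha>. c u' * Afun \<omega> u' + of_int k * c u' - c u' + (if u' = u \<or> precA \<omega> \<alpha> u' u then c u' else 0))"
    unfolding lift_threshold_def
  proof (rule sum.cong)
    fix u' assume u': "u' \<in> set \<alpha>"
    have e: "c u' * ((Afun \<omega> u + of_int k) - frac_tie (Afun \<omega> u + of_int k - \<omega> u') (prec \<alpha> u u'))
      = c u' * (Afun \<omega> u' + of_int k - (if u' = u \<or> precA \<omega> \<alpha> u' u then 0 else 1))"
      using frac_tie_Afun[OF u u', of \<omega> k] by simp
    show "c u' * ((Afun \<omega> u + of_int k) - frac_tie (Afun \<omega> u + of_int k - \<omega> u') (prec \<alpha> u u'))
      = c u' * Afun \<omega> u' + of_int k * c u' - c u' + (if u' = u \<or> precA \<omega> \<alpha> u' u then c u' else 0)"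
      unfolding e by (cases "u' = u \<or> precA \<omega> \<alpha> u' u") (simp_all add: algebra_simps)
  qed simp
  thus ?thesis unfolding weight_upto_def by (simp add: sum.distrib sum_subtractf sum_distrib_left)
qed

lemma mem_lift_support_iff:
  assumes c1: "sum c (set \<alpha>) = 1"
  shows "w \<in> lift_support p \<omega> \<alpha> c z \<longleftrightarrow>
    (\<exists>u\<in>set \<alpha>. \<exists>k::int. w = ext p u (afun \<omega> u + of_int k) \<and> 0 < c u \<and>
       weight_upto \<omega> \<alpha> c u - c u < z - (\<Sum>u\<in>set \<alpha>. c u * Afun \<omega> u) - of_int k + 1 \<and>
       z - (\<Sum>u\<in>set \<alpha>. c u * Afun \<omega> u) - of_int k + 1 < weight_upto \<omega> \<alpha> c u + 1)"
proof -
  have threshold: "lift_threshold \<omega> \<alpha> c (afun \<omega> u + of_int k + \<omega> u) u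
      = (\<Sum>u\<in>set \<alpha>. c u * Afun \<omega> u) + of_int k - 1 + weight_upto \<omega> \<alpha> c u" if "u \<in> set \<alpha>" for u k
  proof -
    have "afun \<omega> u + of_int k + \<omega> u = Afun \<omega> u + of_int k" by (simp add: Afun_eq_afun_plus)
    thus ?thesis using lift_threshold_at_Afun[OF that, of \<omega> c k] c1 by (simp only:)
  qed
  have heights: "h \<in> \<int> \<longleftrightarrow> (\<exists>k::int. h = afun \<omega> u + of_int k)" for h u
  proof
    assume "h \<in> \<int>"
    then obtain m where "h = of_int m" by (auto elim: Ints_cases)
    thus "\<exists>k::int. h = afun \<omega> u + of_int k" by (intro exI[of _ "m - (1 - \<lceil>\<omega> u\<rceil>)"]) (simp add: afun_eq_of_int)
  qed (use afun_Ints in auto)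
  show ?thesis
  proof
    assume "w \<in> lift_support p \<omega> \<alpha> c z"
    then obtain u h where w: "w = ext p u h" "u \<in> set \<alpha>" "0 < c u" "h \<in> \<int>"
      and bounds: "lift_threshold \<omega> \<alpha> c (h + \<omega> u) u - c u < z" "z < lift_threshold \<omega> \<alpha> c (h + \<omega> u) u + 1"
      unfolding lift_support_def by blast
    obtain k where "h = afun \<omega> u + of_int k" using w(4) heights by blast
    thus "\<exists>u\<in>set \<alpha>. \<exists>k::int. w = ext p u (afun \<omega> u + of_int k) \<and> 0 < c u \<and>
       weight_upto \<omega> \<alpha> c u - c u < z - (\<Sum>u\<in>set \<alpha>. c u * Afun \<omega> u) - of_int k + 1 \<and>
       z - (\<Sum>u\<in>set \<alpha>. c u * Afun \<omega> u) - of_int k + 1 < weight_upto \<omega> \<alpha> c u + 1"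
      using w bounds threshold[OF w(2), of k] by (intro bexI[of _ u] exI[of _ k]) auto
  next
    assume "\<exists>u\<in>set \<alpha>. \<exists>k::int. w = ext p u (afun \<omega> u + of_int k) \<and> 0 < c u \<and>
       weight_upto \<omega> \<alpha> c u - c u < z - (\<Sum>u\<in>set \<alpha>. c u * Afun \<omega> u) - of_int k + 1 \<and>
       z - (\<Sum>u\<in>set \<alpha>. c u * Afun \<omega> u) - of_int k + 1 < weight_upto \<omega> \<alpha> c u + 1"
    then obtain u k where u: "u \<in> set \<alpha>" and w: "w = ext p u (afun \<omega> u + of_int k)" and "0 < c u"
      "weight_upto \<omega> \<alpha> c u - c u < z - (\<Sum>u\<in>set \<alpha>. c u * Afun \<omega> u) - of_int k + 1"
      "z - (\<Sum>u\<in>set \<alpha>. c u * Afun \<omega> u) - of_int k + 1 < weight_upto \<omega> \<alpha> c u + 1"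
      by blast
    thus "w \<in> lift_support p \<omega> \<alpha> c z" unfolding lift_support_def
      using threshold[OF u, of k] afun_Ints[of \<omega> u]
      by (intro CollectI exI[of _ u] exI[of _ "afun \<omega> u + of_int k"]) auto
  qed
qed

lemma padd_ext: "in_space p u \<Longrightarrow> in_space p t \<Longrightarrow> padd (ext p u h) (ext p t n) = ext p (padd u t) (h + n)"
  unfolding padd_def ext_def in_space_def fun_eq_iff by auto

lemma coeff_translate:
  assumes ai': "aff_indep (set \<beta>)"
    and c0: "\<forall>u\<in>set \<alpha>. 0 \<le> c u" and c1: "sum c (set \<alpha>) = 1"
    and c'1: "sum c' (set \<beta>) = 1"
    and x': "comb c' (set \<beta>) = padd (comb c (set \<alpha>)) t"
    and FF: "{u\<in>set \<beta>. 0 < c' u} = (\<lambda>u. padd u t) ` {u\<in>set \<alpha>. 0 < c u}"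
    and u: "u \<in> set \<alpha>" "0 < c u"
  shows "c' (padd u t) = c u"
proof -
  let ?F = "{u\<in>set \<alpha>. 0 < c u}" and ?F' = "{u\<in>set \<beta>. 0 < c' u}"
  have inj: "inj_on (\<lambda>u. padd u t) UNIV" unfolding inj_on_def padd_def fun_eq_iff by auto
  define d where "d w = (if w \<in> ?F' then c (psub w t) else 0)" for w
  have pp: "psub (padd u t) t = u" for u unfolding padd_def psub_def by simp
  have pp2: "psub (\<lambda>i. u i + t i) t = u" for u unfolding psub_def by simp
  have sF: "sum c (set \<alpha>) = sum c ?F"
    by (rule sum.mono_neutral_right) (use c0 in \<open>auto simp: less_le\<close>)
  have sF': "sum d (set \<beta>) = sum d ?F'"
    by (rule sum.mono_neutral_right) (auto simp: d_def)
  have "sum d ?F' = (\<Sum>w\<in>?F'. c (psub w t))" by (rule sum.cong) (auto simp: d_def)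
  also have "\<dots> = (\<Sum>u\<in>?F. c u)" unfolding FF by (subst sum.reindex[OF inj_on_subset[OF inj]]) (auto simp: pp)
  finally have d1: "sum d (set \<beta>) = 1" using sF' sF c1 by simp
  have cd: "comb d (set \<beta>) = comb c' (set \<beta>)"
  proof
    fix i
    have "comb d (set \<beta>) i = (\<Sum>w\<in>?F'. d w * w i)" unfolding comb_def
      by (rule sum.mono_neutral_right) (auto simp: d_def)
    also have "\<dots> = (\<Sum>w\<in>?F'. c (psub w t) * w i)" by (rule sum.cong) (auto simp: d_def)
    also have "\<dots> = (\<Sum>u\<in>?F. c u * (u i + t i))" unfolding FF
      by (subst sum.reindex[OF inj_on_subset[OF inj]]) (auto simp: pp pp2 padd_def)
    also have "\<dots> = (\<Sum>u\<in>?F. c u * u i) + sum c ?F * t i" by (simp add: distrib_left sum.distrib sum_distrib_right)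
    also have "(\<Sum>u\<in>?F. c u * u i) = comb c (set \<alpha>) i" unfolding comb_def
      by (rule sum.mono_neutral_left) (use c0 in \<open>auto simp: less_le\<close>)
    finally show "comb d (set \<beta>) i = comb c' (set \<beta>) i" using x' sF c1 by (simp add: padd_def)
  qed
  have "padd u t \<in> ?F'" using FF u by blast
  hence "d (padd u t) = c' (padd u t)" using aff_indep_coeffs_unique[OF ai', of d c' "padd u t"] d1 c'1 cd by auto
  thus ?thesis unfolding d_def using \<open>padd u t \<in> ?F'\<close> by (simp add: pp)
qed

lemma lift_threshold_translate:
  assumes om: "linear_form p \<omega>"
    and c0: "\<forall>u\<in>set \<alpha>. 0 \<le> c u" and c1: "sum c (set \<alpha>) = 1" and c'0: "\<forall>u\<in>set \<beta>. 0 \<le> c' u"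
    and cc: "\<And>u. u \<in> set \<alpha> \<Longrightarrow> 0 < c u \<Longrightarrow> c' (padd u t) = c u"
    and FF: "{u\<in>set \<beta>. 0 < c' u} = (\<lambda>u. padd u t) ` {u\<in>set \<alpha>. 0 < c u}"
    and pr: "\<forall>u\<in>set \<alpha>. \<forall>u'\<in>set \<alpha>. padd u t \<in> set \<beta> \<longrightarrow> padd u' t \<in> set \<beta> \<longrightarrow>
               (prec \<alpha> u u' \<longleftrightarrow> prec \<beta> (padd u t) (padd u' t))"
    and u: "u \<in> set \<alpha>" "0 < c u"
  shows "lift_threshold \<omega> \<beta> c' (\<zeta> + \<omega> t + of_int n) (padd u t) = lift_threshold \<omega> \<alpha> c \<zeta> u + \<omega> t + of_int n"
proof -
  let ?F = "{u\<in>set \<alpha>. 0 < c u}" and ?F' = "{u\<in>set \<beta>. 0 < c' u}"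
  have injA: "inj_on (\<lambda>u. padd u t) A" for A unfolding inj_on_def padd_def fun_eq_iff by auto
  let ?d = "\<omega> t + of_int n"
  have "lift_threshold \<omega> \<beta> c' (\<zeta> + \<omega> t + of_int n) (padd u t) =
      (\<Sum>w\<in>?F'. c' w * (\<zeta> + \<omega> t + of_int n - frac_tie (\<zeta> + \<omega> t + of_int n - \<omega> w) (prec \<beta> (padd u t) w)))"
    unfolding lift_threshold_def by (rule sum.mono_neutral_right) (use c'0 in \<open>auto simp: less_le\<close>)
  also have "\<dots> = (\<Sum>u'\<in>?F. c' (padd u' t) * (\<zeta> + \<omega> t + of_int n - frac_tie (\<zeta> + \<omega> t + of_int n - \<omega> (padd u' t)) (prec \<beta> (padd u t) (padd u' t))))"
    unfolding FF by (simp add: sum.reindex[OF injA] o_def)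
  also have "\<dots> = (\<Sum>u'\<in>?F. c u' * (\<zeta> - frac_tie (\<zeta> - \<omega> u') (prec \<alpha> u u')) + c u' * ?d)"
  proof (rule sum.cong)
    fix u' assume u': "u' \<in> ?F"
    have inb: "padd u t \<in> set \<beta>" "padd u' t \<in> set \<beta>" using FF u u' by blast+
    have e: "\<zeta> + \<omega> t + of_int n - \<omega> (padd u' t) = (\<zeta> - \<omega> u') + of_int n" using linear_form_padd[OF om] by simp
    have pe: "prec \<beta> (padd u t) (padd u' t) = prec \<alpha> u u'" using pr u u' inb by simp
    have "frac_tie (\<zeta> + \<omega> t + of_int n - \<omega> (padd u' t)) (prec \<beta> (padd u t) (padd u' t)) = frac_tie (\<zeta> - \<omega> u') (prec \<alpha> u u')"
      unfolding e pe frac_tie_shift ..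
    thus "c' (padd u' t) * (\<zeta> + \<omega> t + of_int n - frac_tie (\<zeta> + \<omega> t + of_int n - \<omega> (padd u' t)) (prec \<beta> (padd u t) (padd u' t))) =
          c u' * (\<zeta> - frac_tie (\<zeta> - \<omega> u') (prec \<alpha> u u')) + c u' * ?d"
      using cc[of u'] u' by (simp add: algebra_simps)
  qed simp
  also have "\<dots> = (\<Sum>u'\<in>?F. c u' * (\<zeta> - frac_tie (\<zeta> - \<omega> u') (prec \<alpha> u u'))) + sum c ?F * ?d"
    by (simp add: sum.distrib sum_distrib_right)
  also have "sum c ?F = 1"
  proof -
    have "sum c (set \<alpha>) = sum c ?F"
      by (rule sum.mono_neutral_right) (use c0 in \<open>auto simp: less_le\<close>)
    thus ?thesis using c1 by simp
  qed
  also have "(\<Sum>u'\<in>?F. c u' * (\<zeta> - frac_tie (\<zeta> - \<omega> u') (prec \<alpha> u u'))) = lift_threshold \<omega> \<alpha> c \<zeta> u"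
    unfolding lift_threshold_def by (rule sum.mono_neutral_left) (use c0 in \<open>auto simp: less_le\<close>)
  finally show ?thesis by simp
qed

lemma lift_support_translate:
  assumes om: "linear_form p \<omega>"
    and spa: "\<forall>u\<in>set \<alpha>. in_space p u" and tsp: "in_space p t"
    and ai': "aff_indep (set \<beta>)"
    and c0: "\<forall>u\<in>set \<alpha>. 0 \<le> c u" and c1: "sum c (set \<alpha>) = 1"
    and c'0: "\<forall>u\<in>set \<beta>. 0 \<le> c' u" and c'1: "sum c' (set \<beta>) = 1"
    and x': "comb c' (set \<beta>) = padd (comb c (set \<alpha>)) t"
    and FF: "{u\<in>set \<beta>. 0 < c' u} = (\<lambda>u. padd u t) ` {u\<in>set \<alpha>. 0 < c u}"
    and pr: "\<forall>u\<in>set \<alpha>. \<forall>u'\<in>set \<alpha>. padd u t \<in> set \<beta> \<longrightarrow> padd u' t \<in> set \<beta> \<longrightarrow>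
               (prec \<alpha> u u' \<longleftrightarrow> prec \<beta> (padd u t) (padd u' t))"
  shows "lift_support p \<omega> \<beta> c' (z + \<omega> t + of_int n) = (\<lambda>w. padd w (ext p t (of_int n))) ` lift_support p \<omega> \<alpha> c z"
proof -
  have cc: "c' (padd u t) = c u" if "u \<in> set \<alpha>" "0 < c u" for u
    by (rule coeff_translate[OF ai' c0 c1 c'1 x' FF that])
  have threshold: "lift_threshold \<omega> \<beta> c' (\<zeta> + \<omega> t + of_int n) (padd u t) = lift_threshold \<omega> \<alpha> c \<zeta> u + \<omega> t + of_int n"
    if "u \<in> set \<alpha>" "0 < c u" for u \<zeta>
    using lift_threshold_translate[OF om c0 c1 c'0 cc FF pr that] .
  show ?thesis
  proof (rule set_eqI, rule iffI)
    fix w assume "w \<in> lift_support p \<omega> \<beta> c' (z + \<omega> t + of_int n)"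
    then obtain u'' h where w: "w = ext p u'' h" and u'': "u'' \<in> set \<beta>" "0 < c' u''" and hI: "h \<in> \<int>"
      and q1: "lift_threshold \<omega> \<beta> c' (h + \<omega> u'') u'' - c' u'' < z + \<omega> t + of_int n"
      and q2: "z + \<omega> t + of_int n < lift_threshold \<omega> \<beta> c' (h + \<omega> u'') u'' + 1"
      unfolding lift_support_def by blast
    from u'' obtain u where u: "u \<in> set \<alpha>" "0 < c u" and uu: "u'' = padd u t" using FF by blast
    have e1: "h + \<omega> u'' = (h - of_int n + \<omega> u) + \<omega> t + of_int n" unfolding uu linear_form_padd[OF om] by simp
    have P: "lift_threshold \<omega> \<beta> c' (h + \<omega> u'') u'' = lift_threshold \<omega> \<alpha> c (h - of_int n + \<omega> u) u + \<omega> t + of_int n"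
      using threshold[OF u, of "h - of_int n + \<omega> u"] e1 uu by simp
    have cu: "c' u'' = c u" unfolding uu by (rule cc[OF u])
    have "ext p u (h - of_int n) \<in> lift_support p \<omega> \<alpha> c z" unfolding lift_support_def
      using u hI q1 q2 P cu by (intro CollectI exI[of _ u] exI[of _ "h - of_int n"]) (auto simp: Ints_diff)
    moreover have "w = padd (ext p u (h - of_int n)) (ext p t (of_int n))"
      unfolding w uu using padd_ext[of p u t] spa u tsp by simp
    ultimately show "w \<in> (\<lambda>w. padd w (ext p t (of_int n))) ` lift_support p \<omega> \<alpha> c z" by blast
  next
    fix w assume "w \<in> (\<lambda>w. padd w (ext p t (of_int n))) ` lift_support p \<omega> \<alpha> c z"
    then obtain u h where w: "w = padd (ext p u h) (ext p t (of_int n))" and u: "u \<in> set \<alpha>" "0 < c u" and hI: "h \<in> \<int>"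
      and q1: "lift_threshold \<omega> \<alpha> c (h + \<omega> u) u - c u < z"
      and q2: "z < lift_threshold \<omega> \<alpha> c (h + \<omega> u) u + 1"
      unfolding lift_support_def by blast
    have w2: "w = ext p (padd u t) (h + of_int n)" unfolding w using padd_ext[of p u t] spa u tsp by simp
    have inb: "padd u t \<in> set \<beta>" using FF u by blast
    have e1: "h + of_int n + \<omega> (padd u t) = (h + \<omega> u) + \<omega> t + of_int n" using linear_form_padd[OF om] by simp
    have P: "lift_threshold \<omega> \<beta> c' (h + of_int n + \<omega> (padd u t)) (padd u t) = lift_threshold \<omega> \<alpha> c (h + \<omega> u) u + \<omega> t + of_int n"
      unfolding e1 by (rule threshold[OF u])
    show "w \<in> lift_support p \<omega> \<beta> c' (z + \<omega> t + of_int n)" unfolding lift_support_def w2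
      using inb cc[OF u] u hI q1 q2 P
      by (intro CollectI exI[of _ "padd u t"] exI[of _ "h + of_int n"]) (auto simp: Ints_add)
  qed
qed

lemma pos_concat:
  assumes "distinct xs" "\<forall>x\<in>set xs. \<forall>e\<in>set (f x). g e = x"
    "x \<in> set xs" "e \<in> set (f x)" "x' \<in> set xs" "e' \<in> set (f x')"
  shows "pos (concat (map f xs)) e < pos (concat (map f xs)) e' \<longleftrightarrow>
         pos xs x < pos xs x' \<or> (x = x' \<and> pos (f x) e < pos (f x) e')"
  using assms
proof (induction xs)
  case Nil thus ?case by simp
next
  case (Cons a xs)
  have ea: "e \<in> set (f a) \<longleftrightarrow> x = a" using Cons.prems by auto
  have ea': "e' \<in> set (f a) \<longleftrightarrow> x' = a" using Cons.prems by auto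
  have pl: "pos (f a) e < length (f a)" if "x = a" using pos_less_length Cons.prems that by auto
  have pl': "pos (f a) e' < length (f a)" if "x' = a" using pos_less_length Cons.prems that by auto
  show ?case
  proof (cases "x = a")
    case True
    show ?thesis
    proof (cases "x' = a")
      case True thus ?thesis using \<open>x = a\<close> ea ea' by (simp add: pos_append pos_Cons)
    next
      case False thus ?thesis using \<open>x = a\<close> ea ea' pl by (simp add: pos_append pos_Cons)
    qed
  next
    case False
    show ?thesis
    proof (cases "x' = a")
      case True thus ?thesis using \<open>x \<noteq> a\<close> ea ea' pl' by (simp add: pos_append pos_Cons)
    next
      case False
      have IH: "pos (concat (map f xs)) e < pos (concat (map f xs)) e' \<longleftrightarrow>
         pos xs x < pos xs x' \<or> (x = x' \<and> pos (f x) e < pos (f x) e')"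
        using Cons.IH Cons.prems \<open>x \<noteq> a\<close> False by auto
      thus ?thesis using \<open>x \<noteq> a\<close> False ea ea' by (simp add: pos_append pos_Cons)
    qed
  qed
qed

lemma distinct_concat_map:
  assumes "distinct xs" "\<forall>x\<in>set xs. distinct (f x)" "\<forall>x\<in>set xs. \<forall>e\<in>set (f x). g e = x"
  shows "distinct (concat (map f xs))"
  using assms
proof (induction xs)
  case Nil thus ?case by simp
next
  case (Cons a xs)
  have "set (f a) \<inter> set (concat (map f xs)) = {}" using Cons.prems by fastforce
  thus ?case using Cons by simp
qed

locale Y_simplex =
  fixes p :: nat and \<omega> :: "pt \<Rightarrow> real" and \<alpha> :: "pt list" and v :: pt and l :: int
  assumes om: "linear_form p \<omega>"
    and vin: "v \<in> set \<alpha>"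
    and sp: "\<forall>u\<in>set \<alpha>. in_space p u"
    and ai: "aff_indep (set \<alpha>)"
begin

abbreviation "R \<equiv> precA \<omega> \<alpha>"
definition top_vertex :: "pt \<Rightarrow> pt" where "top_vertex u = ext p u (afun \<omega> u + of_int l)"
definition bottom_vertex :: "pt \<Rightarrow> pt" where "bottom_vertex u = ext p u (afun \<omega> u + of_int l - 1)"
definition top_base :: "pt set" where "top_base = {u\<in>set \<alpha>. u = v \<or> R u v}"
definition bottom_base :: "pt set" where "bottom_base = {u\<in>set \<alpha>. u = v \<or> R v u}"

lemma set_Ysimp: "set (Ysimp p \<omega> \<alpha> v l) = top_vertex ` top_base \<union> bottom_vertex ` bottom_base"
  unfolding Ysimp_def top_base_def bottom_base_def top_vertex_def bottom_vertex_def set_concat set_map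
  by (auto simp: rankA_le_iff[OF _ vin] rankA_le_iff[OF vin] split: if_splits)

lemma finite_top_base: "finite top_base" and finite_bottom_base: "finite bottom_base" by (auto simp: top_base_def bottom_base_def)

lemma inj_on_top_vertex: "inj_on top_vertex (set \<alpha>)"
  unfolding inj_on_def top_vertex_def using sp ext_inj by blast
lemma inj_on_bottom_vertex: "inj_on bottom_vertex (set \<alpha>)"
  unfolding inj_on_def bottom_vertex_def using sp ext_inj by blast
lemma top_neq_bottom: "u \<in> set \<alpha> \<Longrightarrow> u' \<in> set \<alpha> \<Longrightarrow> top_vertex u \<noteq> bottom_vertex u'"
  unfolding top_vertex_def bottom_vertex_def using sp ext_inj by fastforce

lemma top_bottom_disjoint: "top_vertex ` top_base \<inter> bottom_vertex ` bottom_base = {}"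
  using top_neq_bottom unfolding top_base_def bottom_base_def by blast

lemma sum_Ysimp: "sum G (set (Ysimp p \<omega> \<alpha> v l)) = (\<Sum>u\<in>top_base. G (top_vertex u)) + (\<Sum>u\<in>bottom_base. G (bottom_vertex u))"
proof -
  have "sum G (set (Ysimp p \<omega> \<alpha> v l)) = sum G (top_vertex ` top_base) + sum G (bottom_vertex ` bottom_base)"
    unfolding set_Ysimp by (rule sum.union_disjoint) (use finite_top_base finite_bottom_base top_bottom_disjoint in auto)
  also have "sum G (top_vertex ` top_base) = (\<Sum>u\<in>top_base. G (top_vertex u))"
    by (rule sum.reindex_cong[OF inj_on_subset[OF inj_on_top_vertex]]) (auto simp: top_base_def)
  also have "sum G (bottom_vertex ` bottom_base) = (\<Sum>u\<in>bottom_base. G (bottom_vertex u))"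
    by (rule sum.reindex_cong[OF inj_on_subset[OF inj_on_bottom_vertex]]) (auto simp: bottom_base_def)
  finally show ?thesis .
qed

lemma sum_top_base: "(\<Sum>u\<in>top_base. f u) = (\<Sum>u\<in>set \<alpha>. if u = v \<or> R u v then f u else 0)"
  unfolding top_base_def by (rule sum.inter_filter) simp
lemma sum_bottom_base: "(\<Sum>u\<in>bottom_base. f u) = (\<Sum>u\<in>set \<alpha>. if u = v \<or> R v u then f u else 0)"
  unfolding bottom_base_def by (rule sum.inter_filter) simp

definition base_coeff :: "(pt \<Rightarrow> real) \<Rightarrow> pt \<Rightarrow> real" where
  "base_coeff C u = (if u = v \<or> R u v then C (top_vertex u) else 0) + (if u = v \<or> R v u then C (bottom_vertex u) else 0)"

lemma top_vertex_in_Ysimp: "u \<in> set \<alpha> \<Longrightarrow> u = v \<or> R u v \<Longrightarrow> top_vertex u \<in> set (Ysimp p \<omega> \<alpha> v l)"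
  unfolding set_Ysimp top_base_def by blast
lemma bottom_vertex_in_Ysimp: "u \<in> set \<alpha> \<Longrightarrow> u = v \<or> R v u \<Longrightarrow> bottom_vertex u \<in> set (Ysimp p \<omega> \<alpha> v l)"
  unfolding set_Ysimp bottom_base_def by blast

lemma top_vertex_other: "i \<noteq> p \<Longrightarrow> top_vertex u i = u i" unfolding top_vertex_def by simp
lemma bottom_vertex_other: "i \<noteq> p \<Longrightarrow> bottom_vertex u i = u i" unfolding bottom_vertex_def by simp
lemma top_vertex_last: "top_vertex u p = afun \<omega> u + of_int l" unfolding top_vertex_def by simp
lemma bottom_vertex_last: "bottom_vertex u p = afun \<omega> u + of_int l - 1" unfolding bottom_vertex_def by simp

lemma sum_Ysimp_split: "sum G (set (Ysimp p \<omega> \<alpha> v l)) =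
   (\<Sum>u\<in>set \<alpha>. (if u = v \<or> R u v then G (top_vertex u) else 0) + (if u = v \<or> R v u then G (bottom_vertex u) else 0))"
  unfolding sum_Ysimp sum_top_base sum_bottom_base sum.distrib ..

lemma base_coeff_nonneg:
  assumes "\<forall>w\<in>set (Ysimp p \<omega> \<alpha> v l). 0 \<le> C w" "u \<in> set \<alpha>"
  shows "0 \<le> base_coeff C u"
  unfolding base_coeff_def using assms top_vertex_in_Ysimp bottom_vertex_in_Ysimp by (auto intro!: add_nonneg_nonneg)

lemma sum_Ysimp_eq_sum_base_coeff: "sum C (set (Ysimp p \<omega> \<alpha> v l)) = sum (base_coeff C) (set \<alpha>)"
  unfolding sum_Ysimp_split base_coeff_def ..

lemma sum_base_coeff: "sum C (set (Ysimp p \<omega> \<alpha> v l)) = 1 \<Longrightarrow> sum (base_coeff C) (set \<alpha>) = 1"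
  unfolding sum_Ysimp_eq_sum_base_coeff .

lemma comb_base_coeff:
  assumes "y = comb C (set (Ysimp p \<omega> \<alpha> v l))"
  shows "y(p:=0) = comb (base_coeff C) (set \<alpha>)"
proof
  fix i
  show "(y(p:=0)) i = comb (base_coeff C) (set \<alpha>) i"
  proof (cases "i = p")
    case True
    have "comb (base_coeff C) (set \<alpha>) i = 0" unfolding comb_def using sp True
      by (auto simp: in_space_def intro!: sum.neutral)
    thus ?thesis using True by simp
  next
    case False
    have "(y(p:=0)) i = (\<Sum>w\<in>set (Ysimp p \<omega> \<alpha> v l). C w * w i)" using False assms by (simp add: comb_def)
    also have "\<dots> = (\<Sum>u\<in>set \<alpha>. (if u = v \<or> R u v then C (top_vertex u) * u i else 0) + (if u = v \<or> R v u then C (bottom_vertex u) * u i else 0))"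
      unfolding sum_Ysimp_split by (rule sum.cong) (simp_all add: top_vertex_other[OF False] bottom_vertex_other[OF False])
    also have "\<dots> = comb (base_coeff C) (set \<alpha>) i" unfolding comb_def base_coeff_def
      by (rule sum.cong) (auto simp: distrib_right)
    finally show ?thesis .
  qed
qed

lemma comb_Ysimp_last:
  assumes "y = comb C (set (Ysimp p \<omega> \<alpha> v l))"
  shows "y p = (\<Sum>u\<in>set \<alpha>. (if u = v \<or> R u v then C (top_vertex u) * (afun \<omega> u + of_int l) else 0)
                     + (if u = v \<or> R v u then C (bottom_vertex u) * (afun \<omega> u + of_int l - 1) else 0))"
proof -
  have "y p = (\<Sum>w\<in>set (Ysimp p \<omega> \<alpha> v l). C w * w p)" using assms by (simp add: comb_def)
  also have "\<dots> = (\<Sum>u\<in>set \<alpha>. (if u = v \<or> R u v then C (top_vertex u) * top_vertex u p else 0)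
                     + (if u = v \<or> R v u then C (bottom_vertex u) * bottom_vertex u p else 0))"
    by (rule sum_Ysimp_split)
  finally show ?thesis by (simp only: top_vertex_last bottom_vertex_last)
qed

lemma top_iff_not_bottom: "u \<in> set \<alpha> \<Longrightarrow> (u = v \<or> R u v) \<longleftrightarrow> \<not> R v u"
  using precA_total[OF _ vin, of u \<omega>] precA_asym[of \<omega> \<alpha> u v] precA_irrefl[of \<omega> \<alpha> v] by blast

lemma weight_upto_plus_above: "weight_upto \<omega> \<alpha> c v + (\<Sum>u\<in>set \<alpha>. if R v u then c u else 0) = sum c (set \<alpha>)"
  unfolding weight_upto_def sum.distrib[symmetric] by (rule sum.cong) (auto simp: top_iff_not_bottom)

definition slack :: "(pt \<Rightarrow> real) \<Rightarrow> real" where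
  "slack C = weight_upto \<omega> \<alpha> (base_coeff C) v - C (bottom_vertex v)"

lemma height_formula:
  assumes C: "sum C (set (Ysimp p \<omega> \<alpha> v l)) = 1" and y: "y = comb C (set (Ysimp p \<omega> \<alpha> v l))"
  shows "y p + \<omega> (y(p:=0)) = (\<Sum>u\<in>set \<alpha>. base_coeff C u * Afun \<omega> u) + of_int l - 1 + slack C"
proof -
  let ?c = "base_coeff C"
  have s1: "sum ?c (set \<alpha>) = 1" by (rule sum_base_coeff[OF C])
  have om1: "\<omega> (y(p:=0)) = (\<Sum>u\<in>set \<alpha>. ?c u * \<omega> u)"
    unfolding comb_base_coeff[OF y] by (rule linear_form_comb[OF om])
  have "y p + \<omega> (y(p:=0)) = (\<Sum>u\<in>set \<alpha>. ?c u * (Afun \<omega> u + of_int l) - (if u = v \<or> R v u then C (bottom_vertex u) else 0))"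
    unfolding comb_Ysimp_last[OF y] om1 sum.distrib[symmetric]
    by (rule sum.cong) (auto simp: base_coeff_def Afun_eq_afun_plus algebra_simps)
  also have "\<dots> = (\<Sum>u\<in>set \<alpha>. ?c u * Afun \<omega> u) + of_int l * sum ?c (set \<alpha>)
        - (\<Sum>u\<in>set \<alpha>. if u = v \<or> R v u then C (bottom_vertex u) else 0)"
    by (simp add: sum_subtractf sum.distrib distrib_left sum_distrib_right sum_distrib_left algebra_simps)
  also have "\<dots> = (\<Sum>u\<in>set \<alpha>. ?c u * Afun \<omega> u) + of_int l
        - (\<Sum>u\<in>set \<alpha>. if u = v \<or> R v u then C (bottom_vertex u) else 0)" using s1 by simp
  also have "(\<Sum>u\<in>set \<alpha>. if u = v \<or> R v u then C (bottom_vertex u) else 0)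
       = (\<Sum>u\<in>set \<alpha>. (if u = v then C (bottom_vertex v) else 0) + (if R v u then ?c u else 0))"
  proof (rule sum.cong)
    fix u assume u: "u \<in> set \<alpha>"
    show "(if u = v \<or> R v u then C (bottom_vertex u) else 0) = (if u = v then C (bottom_vertex v) else 0) + (if R v u then ?c u else 0)"
      using top_iff_not_bottom[OF u] precA_irrefl[of \<omega> \<alpha> v] by (auto simp: base_coeff_def)
  qed simp
  also have "\<dots> = C (bottom_vertex v) + (\<Sum>u\<in>set \<alpha>. if R v u then ?c u else 0)"
    using vin by (simp add: sum.distrib)
  also have "(\<Sum>u\<in>set \<alpha>. if R v u then ?c u else 0) = 1 - weight_upto \<omega> \<alpha> ?c v"
    using weight_upto_plus_above[of ?c] s1 by simp
  finally show ?thesis unfolding slack_def by linarith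
qed

lemma base_coeff_pivot: "base_coeff C v = C (top_vertex v) + C (bottom_vertex v)"
  unfolding base_coeff_def by simp
lemma base_coeff_top: "precA \<omega> \<alpha> u v \<Longrightarrow> base_coeff C u = C (top_vertex u)"
  unfolding base_coeff_def using precA_asym[of \<omega> \<alpha> u v] precA_irrefl[of \<omega> \<alpha> v] by auto
lemma base_coeff_bottom: "precA \<omega> \<alpha> v u \<Longrightarrow> base_coeff C u = C (bottom_vertex u)"
  unfolding base_coeff_def using precA_asym[of \<omega> \<alpha> v u] precA_irrefl[of \<omega> \<alpha> v] by auto

text \<open>Projecting to the base shows that all base coefficients vanish; the two lifts of v then
  differ only in the last coordinate.\<close>

lemma aff_indep_Ysimp: "aff_indep (set (Ysimp p \<omega> \<alpha> v l))"
  unfolding aff_indep_def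
proof (intro allI impI)
  fix C assume H: "sum C (set (Ysimp p \<omega> \<alpha> v l)) = 0 \<and> comb C (set (Ysimp p \<omega> \<alpha> v l)) = (\<lambda>_. 0)"
  let ?y = "comb C (set (Ysimp p \<omega> \<alpha> v l))"
  have s0: "sum (base_coeff C) (set \<alpha>) = 0" using H unfolding sum_Ysimp_split base_coeff_def by simp
  have "(\<lambda>_. 0::real)(p:=0) = comb (base_coeff C) (set \<alpha>)" using comb_base_coeff[of ?y C] H by simp
  hence c0: "comb (base_coeff C) (set \<alpha>) = (\<lambda>_. 0)" by (simp add: fun_upd_def)
  have cz: "\<forall>u\<in>set \<alpha>. base_coeff C u = 0" using ai s0 c0 unfolding aff_indep_def by blast
  have zT: "C (top_vertex u) = 0" if "u \<in> set \<alpha>" "precA \<omega> \<alpha> u v" for u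
    using cz that base_coeff_top[of u C] by simp
  have zB: "C (bottom_vertex u) = 0" if "u \<in> set \<alpha>" "precA \<omega> \<alpha> v u" for u
    using cz that base_coeff_bottom[of u C] by simp
  have cv: "C (top_vertex v) + C (bottom_vertex v) = 0" using cz vin base_coeff_pivot[of C] by simp
  have "?y p = (\<Sum>u\<in>set \<alpha>. (if u = v \<or> R u v then C (top_vertex u) * (afun \<omega> u + of_int l) else 0)
                     + (if u = v \<or> R v u then C (bottom_vertex u) * (afun \<omega> u + of_int l - 1) else 0))"
    by (rule comb_Ysimp_last) simp
  also have "\<dots> = (\<Sum>u\<in>set \<alpha>. if u = v then C (top_vertex v) else 0)"
  proof (rule sum.cong)
    fix u assume u: "u \<in> set \<alpha>"
    show "(if u = v \<or> R u v then C (top_vertex u) * (afun \<omega> u + of_int l) else 0)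
        + (if u = v \<or> R v u then C (bottom_vertex u) * (afun \<omega> u + of_int l - 1) else 0) = (if u = v then C (top_vertex v) else 0)"
    proof (cases "u = v")
      case True
      have "C (bottom_vertex v) = - C (top_vertex v)" using cv by simp
      thus ?thesis using True by (simp add: algebra_simps)
    next
      case False
      thus ?thesis using zT[OF u] zB[OF u] by auto
    qed
  qed simp
  also have "\<dots> = C (top_vertex v)" using vin by simp
  finally have "C (top_vertex v) = 0" using H by simp
  hence zv: "C (top_vertex v) = 0" "C (bottom_vertex v) = 0" using cv by auto
  show "\<forall>w\<in>set (Ysimp p \<omega> \<alpha> v l). C w = 0"
  proof
    fix w assume "w \<in> set (Ysimp p \<omega> \<alpha> v l)"
    then consider u where "u \<in> top_base" "w = top_vertex u" | u where "u \<in> bottom_base" "w = bottom_vertex u" unfolding set_Ysimp by blast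
    thus "C w = 0"
    proof cases
      case 1 thus ?thesis using zT zv unfolding top_base_def by auto
    next
      case 2 thus ?thesis using zB zv unfolding bottom_base_def by auto
    qed
  qed
qed

context
  fixes C :: "pt \<Rightarrow> real"
  assumes C0: "\<forall>w\<in>set (Ysimp p \<omega> \<alpha> v l). 0 \<le> C w" and C1: "sum C (set (Ysimp p \<omega> \<alpha> v l)) = 1"
begin

lemma base_coeff_weights:
  shows "\<forall>u\<in>set \<alpha>. 0 \<le> base_coeff C u" and "\<And>u. weight_upto \<omega> \<alpha> (base_coeff C) u \<le> 1"
    and "\<And>u. 0 \<le> weight_below \<omega> \<alpha> (base_coeff C) u"
    and "\<And>u. u \<in> set \<alpha> \<Longrightarrow> weight_upto \<omega> \<alpha> (base_coeff C) u = base_coeff C u + weight_below \<omega> \<alpha> (base_coeff C) u"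
    and "0 \<le> C (top_vertex v)" "0 \<le> C (bottom_vertex v)"
  using base_coeff_nonneg[OF C0] weight_upto_le_sum[of \<alpha> "base_coeff C"] sum_base_coeff[OF C1]
    weight_below_nonneg[of \<alpha> "base_coeff C"] weight_upto_eq_plus_below
    C0 top_vertex_in_Ysimp[OF vin] bottom_vertex_in_Ysimp[OF vin] by auto

lemma slack_eq: "slack C = C (top_vertex v) + weight_below \<omega> \<alpha> (base_coeff C) v"
  unfolding slack_def using base_coeff_weights(4)[OF vin] base_coeff_pivot[of C] by simp

lemma slack_bounds: "0 \<le> slack C" "slack C \<le> 1"
  using slack_eq base_coeff_weights slack_def[of C] by (smt (verit))+

lemma height_above_base:
  assumes y: "y = comb C (set (Ysimp p \<omega> \<alpha> v l))"
  shows "y p - (\<Sum>u\<in>set \<alpha>. base_coeff C u * afun \<omega> u) = of_int l - 1 + slack C"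
proof -
  have "\<omega> (y(p:=0)) = (\<Sum>u\<in>set \<alpha>. base_coeff C u * \<omega> u)"
    unfolding comb_base_coeff[OF y] by (rule linear_form_comb[OF om])
  thus ?thesis using height_formula[OF C1 y] by (simp add: Afun_eq_afun_plus distrib_left sum.distrib)
qed

lemma top_vertex_positive_iff:
  assumes u: "u \<in> set \<alpha>"
  shows "u \<in> top_base \<and> 0 < C (top_vertex u) \<longleftrightarrow> 0 < base_coeff C u \<and>
    weight_upto \<omega> \<alpha> (base_coeff C) u - base_coeff C u < slack C \<and> slack C < weight_upto \<omega> \<alpha> (base_coeff C) u + 1"
proof -
  note facts = base_coeff_weights(2,3,5,6) base_coeff_weights(4)[OF u] base_coeff_weights(4)[OF vin]
    slack_eq base_coeff_pivot[of C]
  consider "u = v" | "R u v" | "R v u" using precA_total[OF u vin] by blast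
  thus ?thesis
  proof cases
    case 1
    have "u \<in> top_base" using 1 vin unfolding top_base_def by simp
    thus ?thesis using 1 facts by (smt (verit))
  next
    case 2
    have "u \<in> top_base" using 2 u unfolding top_base_def by simp
    moreover have "weight_upto \<omega> \<alpha> (base_coeff C) u \<le> weight_below \<omega> \<alpha> (base_coeff C) v"
      by (rule weight_upto_le_weight_below[OF base_coeff_weights(1) 2])
    ultimately show ?thesis using facts base_coeff_top[OF 2, of C] by (smt (verit))
  next
    case 3
    have "u \<notin> top_base" using 3 precA_asym precA_irrefl unfolding top_base_def by blast
    moreover have "weight_upto \<omega> \<alpha> (base_coeff C) v \<le> weight_below \<omega> \<alpha> (base_coeff C) u"
      by (rule weight_upto_le_weight_below[OF base_coeff_weights(1) 3])
    ultimately show ?thesis using facts by (smt (verit))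
  qed
qed

lemma bottom_vertex_positive_iff:
  assumes u: "u \<in> set \<alpha>"
  shows "u \<in> bottom_base \<and> 0 < C (bottom_vertex u) \<longleftrightarrow> 0 < base_coeff C u \<and>
    weight_upto \<omega> \<alpha> (base_coeff C) u - base_coeff C u - 1 < slack C \<and> slack C < weight_upto \<omega> \<alpha> (base_coeff C) u"
proof -
  note facts = base_coeff_weights(2,3,5,6) base_coeff_weights(4)[OF u] base_coeff_weights(4)[OF vin]
    slack_eq base_coeff_pivot[of C]
  consider "u = v" | "R v u" | "R u v" using precA_total[OF u vin] by blast
  thus ?thesis
  proof cases
    case 1
    have "u \<in> bottom_base" using 1 vin unfolding bottom_base_def by simp
    thus ?thesis using 1 facts by (smt (verit))
  next
    case 2
    have "u \<in> bottom_base" using 2 u unfolding bottom_base_def by simp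
    moreover have "weight_upto \<omega> \<alpha> (base_coeff C) v \<le> weight_below \<omega> \<alpha> (base_coeff C) u"
      by (rule weight_upto_le_weight_below[OF base_coeff_weights(1) 2])
    ultimately show ?thesis using facts base_coeff_bottom[OF 2, of C] by (smt (verit))
  next
    case 3
    have "u \<notin> bottom_base" using 3 precA_asym precA_irrefl unfolding bottom_base_def by blast
    moreover have "weight_upto \<omega> \<alpha> (base_coeff C) u \<le> weight_below \<omega> \<alpha> (base_coeff C) v"
      by (rule weight_upto_le_weight_below[OF base_coeff_weights(1) 3])
    ultimately show ?thesis using facts by (smt (verit))
  qed
qed

lemma positive_vertex_iff:
  "w \<in> set (Ysimp p \<omega> \<alpha> v l) \<and> 0 < C w \<longleftrightarrow>
    (\<exists>u\<in>set \<alpha>. \<exists>k::int. w = ext p u (afun \<omega> u + of_int k) \<and> 0 < base_coeff C u \<and>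
       weight_upto \<omega> \<alpha> (base_coeff C) u - base_coeff C u < of_int (l - k) + slack C \<and>
       of_int (l - k) + slack C < weight_upto \<omega> \<alpha> (base_coeff C) u + 1)"
  (is "?lhs \<longleftrightarrow> (\<exists>u\<in>set \<alpha>. \<exists>k. ?at u k)")
proof
  have top: "top_vertex u = ext p u (afun \<omega> u + of_int l)" for u by (simp add: top_vertex_def)
  have bottom: "bottom_vertex u = ext p u (afun \<omega> u + of_int (l - 1))" for u
    by (simp add: bottom_vertex_def add_diff_eq)
  {
    assume ?lhs
    then consider u where "u \<in> top_base" "w = top_vertex u" "0 < C w"
      | u where "u \<in> bottom_base" "w = bottom_vertex u" "0 < C w" unfolding set_Ysimp by blast
    thus "\<exists>u\<in>set \<alpha>. \<exists>k. ?at u k"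
    proof cases
      case 1
      thus ?thesis using top_vertex_positive_iff[of u] top unfolding top_base_def
        by (intro bexI[of _ u] exI[of _ l]) auto
    next
      case 2
      thus ?thesis using bottom_vertex_positive_iff[of u] bottom unfolding bottom_base_def
        by (intro bexI[of _ u] exI[of _ "l - 1"]) auto
    qed
  next
    assume "\<exists>u\<in>set \<alpha>. \<exists>k. ?at u k"
    then obtain u k where u: "u \<in> set \<alpha>" and at: "?at u k" by blast
    have "real_of_int (l - k) = of_int l - of_int k" by simp
    hence "of_int k < of_int l + (1::real)" "of_int l < of_int k + (2::real)"
      using at slack_bounds base_coeff_weights(2,3)[of u] base_coeff_weights(4)[OF u] by linarith+
    hence "k = l \<or> k = l - 1" by linarith
    thus ?lhs
    proof
      assume "k = l"
      thus ?lhs using top_vertex_positive_iff[OF u] at top top_vertex_in_Ysimp u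
        unfolding top_base_def by auto
    next
      assume "k = l - 1"
      thus ?lhs using bottom_vertex_positive_iff[OF u] at bottom bottom_vertex_in_Ysimp u
        unfolding bottom_base_def by auto
    qed
  }
qed

lemma positive_coeffs_Ysimp:
  assumes y: "y = comb C (set (Ysimp p \<omega> \<alpha> v l))"
  shows "{w \<in> set (Ysimp p \<omega> \<alpha> v l). 0 < C w} = lift_support p \<omega> \<alpha> (base_coeff C) (y p + \<omega> (y(p:=0)))"
proof -
  have level: "y p + \<omega> (y(p:=0)) - (\<Sum>u\<in>set \<alpha>. base_coeff C u * Afun \<omega> u) - of_int k + 1
      = of_int (l - k) + slack C" for k
    using height_formula[OF C1 y] by simp
  show ?thesis unfolding set_eq_iff mem_Collect_eq positive_vertex_iff
      mem_lift_support_iff[OF sum_base_coeff[OF C1]] level by blast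
qed

end

lemma SpVt_Ysimp:
  assumes "y \<in> chull (set (Ysimp p \<omega> \<alpha> v l))"
  shows "\<exists>c. (\<forall>u\<in>set \<alpha>. 0 \<le> c u) \<and> sum c (set \<alpha>) = 1 \<and> y(p:=0) = comb c (set \<alpha>)
     \<and> SpVt (Ysimp p \<omega> \<alpha> v l) y = lift_support p \<omega> \<alpha> c (y p + \<omega> (y(p:=0)))"
proof -
  obtain C where C0: "\<forall>w\<in>set (Ysimp p \<omega> \<alpha> v l). 0 \<le> C w" and C1: "sum C (set (Ysimp p \<omega> \<alpha> v l)) = 1"
    and y: "y = comb C (set (Ysimp p \<omega> \<alpha> v l))" using assms unfolding chull_def by blast
  have "SpVt (Ysimp p \<omega> \<alpha> v l) y = {w \<in> set (Ysimp p \<omega> \<alpha> v l). 0 < C w}"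
    by (rule SpVt_eq_support[OF aff_indep_Ysimp C0 C1 y])
  also have "\<dots> = lift_support p \<omega> \<alpha> (base_coeff C) (y p + \<omega> (y(p:=0)))" by (rule positive_coeffs_Ysimp[OF C0 C1 y])
  finally show ?thesis using base_coeff_nonneg[OF C0] sum_base_coeff[OF C1] comb_base_coeff[OF y] by blast
qed

definition vertex_pair :: "pt \<Rightarrow> pt list" where "vertex_pair u = (if rankA \<omega> \<alpha> u \<le> rankA \<omega> \<alpha> v then [ext p u (afun \<omega> u + of_int l)] else []) @
        (if rankA \<omega> \<alpha> v \<le> rankA \<omega> \<alpha> u then [ext p u (afun \<omega> u + of_int l - 1)] else [])"

lemma Ysimp_eq_concat_vertex_pair: "Ysimp p \<omega> \<alpha> v l = concat (map vertex_pair \<alpha>)"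
  unfolding Ysimp_def vertex_pair_def ..

lemma vertex_pair_base: "u \<in> set \<alpha> \<Longrightarrow> e \<in> set (vertex_pair u) \<Longrightarrow> e(p:=0) = u"
  unfolding vertex_pair_def using sp ext_fun_upd_zero by (auto split: if_splits)

lemma vertex_pair_heights_differ: "ext p u (afun \<omega> u + of_int l) \<noteq> ext p u (afun \<omega> u + of_int l - 1)"
proof
  assume "ext p u (afun \<omega> u + of_int l) = ext p u (afun \<omega> u + of_int l - 1)"
  hence "ext p u (afun \<omega> u + of_int l) p = ext p u (afun \<omega> u + of_int l - 1) p" by simp
  thus False by simp
qed

lemma distinct_vertex_pair: "distinct (vertex_pair u)"
  unfolding vertex_pair_def using vertex_pair_heights_differ[of u] by simp

lemma distinct_Ysimp: assumes "distinct \<alpha>" shows "distinct (Ysimp p \<omega> \<alpha> v l)"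
  unfolding Ysimp_eq_concat_vertex_pair using distinct_concat_map[OF assms, of vertex_pair "\<lambda>e. e(p:=0)"] distinct_vertex_pair vertex_pair_base by blast

lemma pos_vertex_pair: assumes u: "u \<in> set \<alpha>" and e: "e \<in> set (vertex_pair u)" "e' \<in> set (vertex_pair u)"
  shows "pos (vertex_pair u) e < pos (vertex_pair u) e' \<longleftrightarrow> e' p < e p"
proof -
  let ?a = "ext p u (afun \<omega> u + of_int l)" and ?b = "ext p u (afun \<omega> u + of_int l - 1)"
  have ab: "?a \<noteq> ?b" by (rule vertex_pair_heights_differ)
  have ap: "?a p = afun \<omega> u + of_int l" and bp: "?b p = afun \<omega> u + of_int l - 1" by simp_all
  consider "vertex_pair u = []" | "vertex_pair u = [?a]" | "vertex_pair u = [?b]" | "vertex_pair u = [?a, ?b]" unfolding vertex_pair_def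
    by (cases "rankA \<omega> \<alpha> u \<le> rankA \<omega> \<alpha> v"; cases "rankA \<omega> \<alpha> v \<le> rankA \<omega> \<alpha> u") simp_all
  thus ?thesis
  proof cases
    case 1 thus ?thesis using e by simp
  next
    case 2 thus ?thesis using e by simp
  next
    case 3 thus ?thesis using e by simp
  next
    case 4
    have "e = ?a \<or> e = ?b" "e' = ?a \<or> e' = ?b" using e 4 by auto
    thus ?thesis using 4 ab ap bp by (auto simp: pos_Cons)
  qed
qed

lemma Ysimp_vertex: assumes "w \<in> set (Ysimp p \<omega> \<alpha> v l)"
  shows "\<exists>u\<in>set \<alpha>. w = ext p u (w p) \<and> w(p:=0) = u \<and> w p \<in> \<int>"
proof -
  obtain u where u: "u \<in> set \<alpha>" and w: "w \<in> set (vertex_pair u)" using assms unfolding Ysimp_eq_concat_vertex_pair by auto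
  have wu: "w(p:=0) = u" by (rule vertex_pair_base[OF u w])
  have "w = ext p u (w p)" using wu unfolding ext_def by (metis fun_upd_triv fun_upd_upd)
  moreover have "w p \<in> \<int>"
  proof -
    have "w p = afun \<omega> u + of_int l \<or> w p = afun \<omega> u + of_int l - 1" using w unfolding vertex_pair_def
      by (auto split: if_splits)
    thus ?thesis using afun_Ints[of \<omega> u] by (auto intro: Ints_add Ints_diff)
  qed
  ultimately show ?thesis using u wu by blast
qed

lemma prec_Ysimp:
  assumes w: "w \<in> set (Ysimp p \<omega> \<alpha> v l)" and w': "w' \<in> set (Ysimp p \<omega> \<alpha> v l)" and da: "distinct \<alpha>"
  shows "prec (Ysimp p \<omega> \<alpha> v l) w w' \<longleftrightarrow> prec \<alpha> (w(p:=0)) (w'(p:=0)) \<or> (w(p:=0) = w'(p:=0) \<and> w' p < w p)"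
proof -
  obtain u where u: "u \<in> set \<alpha>" "w \<in> set (vertex_pair u)" using w unfolding Ysimp_eq_concat_vertex_pair by auto
  obtain u' where u': "u' \<in> set \<alpha>" "w' \<in> set (vertex_pair u')" using w' unfolding Ysimp_eq_concat_vertex_pair by auto
  have pu: "w(p:=0) = u" "w'(p:=0) = u'" using vertex_pair_base u u' by auto
  have "prec (Ysimp p \<omega> \<alpha> v l) w w' \<longleftrightarrow> pos \<alpha> u < pos \<alpha> u' \<or> (u = u' \<and> pos (vertex_pair u) w < pos (vertex_pair u) w')"
    unfolding prec_def Ysimp_eq_concat_vertex_pair using vertex_pair_base
    by (intro pos_concat[where g="\<lambda>e. e(p:=0)"] da u(1) u(2) u'(1) u'(2)) blast
  also have "\<dots> \<longleftrightarrow> prec \<alpha> u u' \<or> (u = u' \<and> w' p < w p)"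
    using pos_vertex_pair[OF u(1) u(2)] u' unfolding prec_def by auto
  finally show ?thesis using pu by simp
qed

lemma top_base_Un_bottom_base: "top_base \<union> bottom_base = set \<alpha>"
  unfolding top_base_def bottom_base_def using precA_total[OF _ vin, of _ \<omega>] by blast
lemma top_base_Int_bottom_base: "top_base \<inter> bottom_base = {v}"
  unfolding top_base_def bottom_base_def using vin precA_asym[of \<omega> \<alpha> v] by blast

lemma length_Ysimp: assumes da: "distinct \<alpha>" shows "length (Ysimp p \<omega> \<alpha> v l) = length \<alpha> + 1"
proof -
  have "length (Ysimp p \<omega> \<alpha> v l) = card (set (Ysimp p \<omega> \<alpha> v l))"
    using distinct_card[OF distinct_Ysimp[OF da]] by simp
  also have "\<dots> = card (top_vertex ` top_base) + card (bottom_vertex ` bottom_base)" unfolding set_Ysimp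
    by (rule card_Un_disjoint) (use finite_top_base finite_bottom_base top_bottom_disjoint in auto)
  also have "\<dots> = card top_base + card bottom_base"
    using card_image[OF inj_on_subset[OF inj_on_top_vertex]] card_image[OF inj_on_subset[OF inj_on_bottom_vertex]]
    unfolding top_base_def bottom_base_def by auto
  also have "\<dots> = card (top_base \<union> bottom_base) + card (top_base \<inter> bottom_base)" by (rule card_Un_Int[OF finite_top_base finite_bottom_base])
  also have "\<dots> = length \<alpha> + 1" unfolding top_base_Un_bottom_base top_base_Int_bottom_base using distinct_card[OF da] by simp
  finally show ?thesis .
qed

lemma Ysimp_in_space: "\<forall>w\<in>set (Ysimp p \<omega> \<alpha> v l). in_space (Suc p) w"
  unfolding set_Ysimp top_base_def bottom_base_def top_vertex_def bottom_vertex_def using sp by (auto simp: in_space_def ext_def)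

lemma Ysimp_height_window:
  assumes "w \<in> set (Ysimp p \<omega> \<alpha> v l)"
  shows "Afun \<omega> v + of_int l - 1 \<le> w p + \<omega> (w(p:=0)) \<and> w p + \<omega> (w(p:=0)) \<le> Afun \<omega> v + of_int l"
proof -
  from assms consider u where "u \<in> top_base" "w = top_vertex u" | u where "u \<in> bottom_base" "w = bottom_vertex u"
    unfolding set_Ysimp by blast
  thus ?thesis
  proof cases
    case 1
    hence u: "u \<in> set \<alpha>" and "Afun \<omega> u \<le> Afun \<omega> v" using precA_imp_Afun_le unfolding top_base_def by auto
    moreover have "w p + \<omega> (w(p:=0)) = Afun \<omega> u + of_int l"
      using 1(2) ext_fun_upd_zero sp u by (simp add: top_vertex_def Afun_eq_afun_plus)
    ultimately show ?thesis using Afun_pos[of \<omega> u] Afun_le_1[of \<omega> v] by simp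
  next
    case 2
    hence u: "u \<in> set \<alpha>" and "Afun \<omega> v \<le> Afun \<omega> u" using precA_imp_Afun_le unfolding bottom_base_def by auto
    moreover have "w p + \<omega> (w(p:=0)) = Afun \<omega> u + of_int l - 1"
      using 2(2) ext_fun_upd_zero sp u by (simp add: bottom_vertex_def Afun_eq_afun_plus)
    ultimately show ?thesis using Afun_pos[of \<omega> v] Afun_le_1[of \<omega> u] by simp
  qed
qed

definition lift_coeffs :: "(pt \<Rightarrow> real) \<Rightarrow> real \<Rightarrow> pt \<Rightarrow> real" where
  "lift_coeffs c \<sigma> w = (if w = top_vertex v then \<sigma> - weight_below \<omega> \<alpha> c v
     else if w = bottom_vertex v then weight_upto \<omega> \<alpha> c v - \<sigma> else c (w(p:=0)))"

lemma base_coeff_lift_coeffs: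
  assumes u: "u \<in> set \<alpha>"
  shows "base_coeff (lift_coeffs c \<sigma>) u = c u"
proof (cases "u = v")
  case True
  have "top_vertex v \<noteq> bottom_vertex v" using top_neq_bottom vin by blast
  thus ?thesis using True weight_upto_eq_plus_below[OF vin, of \<omega> c]
    by (simp add: base_coeff_pivot lift_coeffs_def)
next
  case False
  have "top_vertex u \<noteq> top_vertex v" "bottom_vertex u \<noteq> bottom_vertex v"
    using inj_on_top_vertex inj_on_bottom_vertex u vin False unfolding inj_on_def by blast+
  moreover have "top_vertex u \<noteq> bottom_vertex v" "bottom_vertex u \<noteq> top_vertex v"
    using top_neq_bottom u vin by metis+
  moreover have "(top_vertex u)(p:=0) = u" "(bottom_vertex u)(p:=0) = u"
    unfolding top_vertex_def bottom_vertex_def using ext_fun_upd_zero sp u by blast+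
  ultimately show ?thesis using top_iff_not_bottom[OF u] False
    unfolding base_coeff_def lift_coeffs_def by auto
qed

lemma lift_coeffs_nonneg:
  assumes "\<forall>u\<in>set \<alpha>. 0 \<le> c u" "weight_below \<omega> \<alpha> c v \<le> \<sigma>" "\<sigma> \<le> weight_upto \<omega> \<alpha> c v"
  shows "\<forall>w\<in>set (Ysimp p \<omega> \<alpha> v l). 0 \<le> lift_coeffs c \<sigma> w"
proof
  fix w assume "w \<in> set (Ysimp p \<omega> \<alpha> v l)"
  hence "w(p:=0) \<in> set \<alpha>" using Ysimp_vertex by force
  thus "0 \<le> lift_coeffs c \<sigma> w" using assms unfolding lift_coeffs_def by simp
qed

lemma lift_in_chull_Ysimp:
  assumes c0: "\<forall>u\<in>set \<alpha>. 0 \<le> c u" and c1: "sum c (set \<alpha>) = 1"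
    and \<sigma>: "weight_below \<omega> \<alpha> c v \<le> \<sigma>" "\<sigma> \<le> weight_upto \<omega> \<alpha> c v"
  shows "ext p (comb c (set \<alpha>)) ((\<Sum>u\<in>set \<alpha>. c u * afun \<omega> u) + of_int l - 1 + \<sigma>) \<in> chull (set (Ysimp p \<omega> \<alpha> v l))"
proof -
  let ?C = "lift_coeffs c \<sigma>"
  have base: "base_coeff ?C u = c u" if "u \<in> set \<alpha>" for u using base_coeff_lift_coeffs[OF that] .
  have C1: "sum ?C (set (Ysimp p \<omega> \<alpha> v l)) = 1"
    unfolding sum_Ysimp_eq_sum_base_coeff using c1 base by simp
  define y where "y = comb ?C (set (Ysimp p \<omega> \<alpha> v l))"
  have "comb (base_coeff ?C) (set \<alpha>) = comb c (set \<alpha>)"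
    unfolding comb_def using base by (intro ext sum.cong) simp_all
  hence base_y: "y(p:=0) = comb c (set \<alpha>)" using comb_base_coeff[OF y_def] by simp
  have "top_vertex v \<noteq> bottom_vertex v" using top_neq_bottom vin by blast
  hence "?C (bottom_vertex v) = weight_upto \<omega> \<alpha> c v - \<sigma>" by (simp add: lift_coeffs_def)
  moreover have "weight_upto \<omega> \<alpha> (base_coeff ?C) v = weight_upto \<omega> \<alpha> c v"
    unfolding weight_upto_def using base by (intro sum.cong) auto
  ultimately have "slack ?C = \<sigma>" unfolding slack_def by simp
  moreover have "(\<Sum>u\<in>set \<alpha>. base_coeff ?C u * afun \<omega> u) = (\<Sum>u\<in>set \<alpha>. c u * afun \<omega> u)"
    using base by (intro sum.cong) simp_all
  ultimately have "y p = (\<Sum>u\<in>set \<alpha>. c u * afun \<omega> u) + of_int l - 1 + \<sigma>"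
    using height_above_base[OF lift_coeffs_nonneg[OF c0 \<sigma>] C1 y_def] by simp
  hence "y = ext p (comb c (set \<alpha>)) ((\<Sum>u\<in>set \<alpha>. c u * afun \<omega> u) + of_int l - 1 + \<sigma>)"
    using base_y unfolding ext_def fun_eq_iff by (metis fun_upd_apply)
  thus ?thesis unfolding chull_def y_def using lift_coeffs_nonneg[OF c0 \<sigma>] C1
    by (intro CollectI exI[of _ ?C]) simp
qed

lemma open_simplex_Ysimp:
  assumes "y \<in> open_simplex (set (Ysimp p \<omega> \<alpha> v l))"
  shows "\<exists>c. (\<forall>u\<in>set \<alpha>. 0 < c u) \<and> sum c (set \<alpha>) = 1 \<and> y(p:=0) = comb c (set \<alpha>) \<and>
     of_int l - 1 < y p - (\<Sum>u\<in>set \<alpha>. c u * afun \<omega> u) \<and> y p - (\<Sum>u\<in>set \<alpha>. c u * afun \<omega> u) < of_int l"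
proof -
  obtain C where C0: "\<forall>w\<in>set (Ysimp p \<omega> \<alpha> v l). 0 < C w" and C1: "sum C (set (Ysimp p \<omega> \<alpha> v l)) = 1"
    and y: "y = comb C (set (Ysimp p \<omega> \<alpha> v l))" using assms unfolding open_simplex_def by blast
  have C0': "\<forall>w\<in>set (Ysimp p \<omega> \<alpha> v l). 0 \<le> C w" using C0 by (simp add: less_imp_le)
  have "0 < base_coeff C u" if u: "u \<in> set \<alpha>" for u
  proof (cases "u = v \<or> R u v")
    case True
    have "0 < C (top_vertex u)" using C0 top_vertex_in_Ysimp[OF u True] by blast
    moreover have "0 \<le> (if u = v \<or> R v u then C (bottom_vertex u) else 0)"
      using C0' bottom_vertex_in_Ysimp[OF u] by auto
    ultimately show ?thesis unfolding base_coeff_def using True by simp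
  next
    case False
    hence "u = v \<or> R v u" using top_iff_not_bottom[OF u] by blast
    moreover have "0 < C (bottom_vertex u)" using C0 bottom_vertex_in_Ysimp[OF u] calculation by blast
    ultimately show ?thesis unfolding base_coeff_def using False by simp
  qed
  moreover have "0 < slack C"
    using slack_eq[OF C0' C1] base_coeff_weights(3)[OF C0' C1] C0 top_vertex_in_Ysimp[OF vin]
    by (smt (verit))
  moreover have "slack C < 1"
    using slack_def[of C] base_coeff_weights(2)[OF C0' C1] C0 bottom_vertex_in_Ysimp[OF vin]
    by (smt (verit))
  ultimately show ?thesis using sum_base_coeff[OF C1] comb_base_coeff[OF y] height_above_base[OF C0' C1 y]
    by (intro exI[of _ "base_coeff C"]) auto
qed

end

lemma set_Ycx: "\<gamma> \<in> set (Ycx p X \<omega> M1 M2) \<longleftrightarrow> (\<exists>\<alpha>\<in>set X. \<exists>v\<in>set \<alpha>. \<exists>l. M1 \<le> l \<and> l < M2 \<and> \<gamma> = Ysimp p \<omega> \<alpha> v l)"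
  unfolding Ycx_def by (fastforce simp: image_iff)

lemma in_space_comb: "\<forall>u\<in>S. in_space p u \<Longrightarrow> in_space p (comb c S)"
  unfolding in_space_def comb_def by (intro allI impI sum.neutral) auto

lemma padd_zero: "padd y (\<lambda>_. 0) = y" unfolding padd_def by simp

lemma zero_fun_upd: "(\<lambda>_. 0::real)(p := 0) = (\<lambda>_. 0)" by (simp add: fun_eq_iff)

definition lift_lattice :: "nat \<Rightarrow> (pt \<Rightarrow> bool) \<Rightarrow> int \<Rightarrow> pt \<Rightarrow> bool" where
  "lift_lattice p L M T \<longleftrightarrow> L (T(p:=0)) \<and> (\<exists>m::int. T p = of_int M * of_int m)"

lemma ex_level_decomposition:
  fixes x :: real and M1 M2 :: int
  assumes "M1 < M2"
  shows "\<exists>m l \<sigma>. M1 \<le> l \<and> l < M2 \<and> 0 \<le> \<sigma> \<and> \<sigma> < 1 \<and>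
           x = of_int (M2 - M1) * of_int m + of_int l - 1 + \<sigma>"
proof -
  define M where "M = M2 - M1"
  have Mpos: "(0::real) < of_int M" using assms M_def by simp
  define m where "m = \<lfloor>(x - of_int M1 + 1) / of_int M\<rfloor>"
  define \<tau> where "\<tau> = x - of_int M * of_int m - of_int M1 + 1"
  have "of_int m * of_int M \<le> x - of_int M1 + 1"
    unfolding m_def by (rule floor_divide_lower[OF Mpos])
  hence \<tau>0: "0 \<le> \<tau>" unfolding \<tau>_def by (simp add: algebra_simps)
  have "x - of_int M1 + 1 < (of_int m + 1) * of_int M"
    unfolding m_def by (rule floor_divide_upper[OF Mpos])
  hence \<tau>M: "\<tau> < of_int M" unfolding \<tau>_def by (simp add: algebra_simps)
  define l where "l = M1 + \<lfloor>\<tau>\<rfloor>"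
  have "M1 \<le> l" "l < M2" using \<tau>0 \<tau>M unfolding l_def M_def by linarith+
  moreover have "0 \<le> \<tau> - of_int \<lfloor>\<tau>\<rfloor>" "\<tau> - of_int \<lfloor>\<tau>\<rfloor> < 1" by linarith+
  moreover have "x = of_int M * of_int m + of_int l - 1 + (\<tau> - of_int \<lfloor>\<tau>\<rfloor>)"
    unfolding l_def \<tau>_def by simp
  ultimately show ?thesis unfolding M_def by blast
qed

locale Y_step =
  fixes p :: nat and L :: "pt \<Rightarrow> bool" and X :: "pt list list"
    and \<omega> :: "pt \<Rightarrow> real" and M1 M2 :: int
  assumes Lambda_X: "Lambda_complex p L X"
    and lattice_in_space: "\<And>t. L t \<Longrightarrow> in_space p t"
    and lattice_zero: "L (\<lambda>_. 0)"
    and linear: "linear_form p \<omega>"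
    and levels: "M1 < M2"
begin

abbreviation "Y \<equiv> Ycx p X \<omega> M1 M2"
abbreviation "L' \<equiv> lift_lattice p L (M2 - M1)"

lemma X_ordered: "ordered_complex p X"
  using Lambda_X unfolding Lambda_complex_def by (elim conjE) assumption

lemma X_simplex:
  assumes "\<alpha> \<in> set X"
  shows "distinct \<alpha>" "length \<alpha> = p + 1" "\<forall>u\<in>set \<alpha>. in_space p u" "aff_indep (set \<alpha>)"
  using X_ordered assms unfolding ordered_complex_def by blast+

lemma X_prec_consistent:
  assumes "\<alpha> \<in> set X" "\<beta> \<in> set X" "v \<in> set \<alpha> \<inter> set \<beta>" "w \<in> set \<alpha> \<inter> set \<beta>"
  shows "prec \<alpha> v w \<longleftrightarrow> prec \<beta> v w"
proof -
  have "\<forall>\<alpha>\<in>set X. \<forall>\<beta>\<in>set X. \<forall>v\<in>set \<alpha> \<inter> set \<beta>. \<forall>w\<in>set \<alpha> \<inter> set \<beta>.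
          prec \<alpha> v w \<longleftrightarrow> prec \<beta> v w"
    using Lambda_X unfolding Lambda_complex_def by (elim conjE) assumption
  thus ?thesis using assms by blast
qed

lemma X_prec_translate:
  assumes "\<alpha> \<in> set X" "\<alpha>' \<in> set X" "v \<in> set \<alpha>" "w \<in> set \<alpha>" "L t"
    "padd v t \<in> set \<alpha>'" "padd w t \<in> set \<alpha>'"
  shows "prec \<alpha> v w \<longleftrightarrow> prec \<alpha>' (padd v t) (padd w t)"
proof -
  have "\<forall>\<alpha>\<in>set X. \<forall>\<alpha>'\<in>set X. \<forall>v\<in>set \<alpha>. \<forall>w\<in>set \<alpha>. \<forall>t. L t \<longrightarrow>
          padd v t \<in> set \<alpha>' \<longrightarrow> padd w t \<in> set \<alpha>' \<longrightarrow>
          (prec \<alpha> v w \<longleftrightarrow> prec \<alpha>' (padd v t) (padd w t))"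
    using Lambda_X unfolding Lambda_complex_def by (elim conjE) assumption
  thus ?thesis using assms by blast
qed

lemma X_covers:
  assumes "in_space p y"
  shows "\<exists>\<alpha>\<in>set X. \<exists>x\<in>chull (set \<alpha>). L (psub y x)"
proof -
  have "\<forall>y. in_space p y \<longrightarrow> (\<exists>\<alpha>\<in>set X. \<exists>x\<in>chull (set \<alpha>). L (psub y x))"
    using Lambda_X unfolding Lambda_complex_def by (elim conjE) assumption
  thus ?thesis using assms by blast
qed

lemma X_open_inj:
  assumes "\<alpha> \<in> set X" "\<beta> \<in> set X" "x \<in> open_simplex (set \<alpha>)" "y \<in> open_simplex (set \<beta>)"
    "L (psub x y)"
  shows "x = y"
proof -
  have "\<forall>\<alpha>\<in>set X. \<forall>\<beta>\<in>set X. \<forall>x\<in>open_simplex (set \<alpha>). \<forall>y\<in>open_simplex (set \<beta>).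
          L (psub x y) \<longrightarrow> x = y"
    using Lambda_X unfolding Lambda_complex_def by (elim conjE) assumption
  thus ?thesis using assms by blast
qed

lemma X_SpVt_translate:
  assumes "\<alpha> \<in> set X" "\<alpha>' \<in> set X" "x \<in> chull (set \<alpha>)" "x' \<in> chull (set \<alpha>')" "L t"
    "x' = padd x t"
  shows "SpVt \<alpha>' x' = (\<lambda>v. padd v t) ` SpVt \<alpha> x"
proof -
  have "\<forall>\<alpha>\<in>set X. \<forall>\<alpha>'\<in>set X. \<forall>x\<in>chull (set \<alpha>). \<forall>x'\<in>chull (set \<alpha>'). \<forall>t.
          L t \<longrightarrow> x' = padd x t \<longrightarrow> SpVt \<alpha>' x' = (\<lambda>v. padd v t) ` SpVt \<alpha> x"
    using Lambda_X unfolding Lambda_complex_def by (elim conjE) assumption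
  thus ?thesis using assms by blast
qed

lemma Y_simplex_X: "\<alpha> \<in> set X \<Longrightarrow> v \<in> set \<alpha> \<Longrightarrow> Y_simplex p \<omega> \<alpha> v"
  using X_simplex linear by unfold_locales auto

lemma mem_Y:
  assumes "\<gamma> \<in> set Y"
  obtains \<alpha> v l where "\<alpha> \<in> set X" "v \<in> set \<alpha>" "M1 \<le> l" "l < M2" "\<gamma> = Ysimp p \<omega> \<alpha> v l"
  using assms unfolding set_Ycx by blast

lemma SpVt_Ysimp_translate:
  assumes a: "\<alpha> \<in> set X" "v \<in> set \<alpha>" and b: "\<beta> \<in> set X" "v' \<in> set \<beta>"
    and y: "y \<in> chull (set (Ysimp p \<omega> \<alpha> v l))" and y': "y' \<in> chull (set (Ysimp p \<omega> \<beta> v' l'))"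
    and LT: "L (T(p:=0))" and Tp: "T p = of_int n" and yy: "y' = padd y T"
  shows "SpVt (Ysimp p \<omega> \<beta> v' l') y' = (\<lambda>w. padd w T) ` SpVt (Ysimp p \<omega> \<alpha> v l) y"
proof -
  note spa = X_simplex(3)[OF a(1)] and aia = X_simplex(4)[OF a(1)] and aib = X_simplex(4)[OF b(1)]
  interpret Ya: Y_simplex p \<omega> \<alpha> v l by (rule Y_simplex_X[OF a])
  interpret Yb: Y_simplex p \<omega> \<beta> v' l' by (rule Y_simplex_X[OF b])
  obtain c where c0: "\<forall>u\<in>set \<alpha>. 0 \<le> c u" and c1: "sum c (set \<alpha>) = 1" and cx: "y(p:=0) = comb c (set \<alpha>)"
    and sv: "SpVt (Ysimp p \<omega> \<alpha> v l) y = lift_support p \<omega> \<alpha> c (y p + \<omega> (y(p:=0)))"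
    using Ya.SpVt_Ysimp[OF y] by blast
  obtain c' where c'0: "\<forall>u\<in>set \<beta>. 0 \<le> c' u" and c'1: "sum c' (set \<beta>) = 1" and c'x: "y'(p:=0) = comb c' (set \<beta>)"
    and sv': "SpVt (Ysimp p \<omega> \<beta> v' l') y' = lift_support p \<omega> \<beta> c' (y' p + \<omega> (y'(p:=0)))"
    using Yb.SpVt_Ysimp[OF y'] by blast
  define t where "t = T(p:=0)"
  have Lt: "L t" using LT t_def by simp
  have xx: "y'(p:=0) = padd (y(p:=0)) t" unfolding yy t_def padd_def by (simp add: fun_eq_iff)
  have xa: "y(p:=0) \<in> chull (set \<alpha>)" unfolding chull_def using c0 c1 cx by blast
  have xb: "y'(p:=0) \<in> chull (set \<beta>)" unfolding chull_def using c'0 c'1 c'x by blast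
  have "SpVt \<beta> (y'(p:=0)) = (\<lambda>u. padd u t) ` SpVt \<alpha> (y(p:=0))"
    using X_SpVt_translate[OF a(1) b(1) xa xb Lt xx] .
  hence FF: "{u\<in>set \<beta>. 0 < c' u} = (\<lambda>u. padd u t) ` {u\<in>set \<alpha>. 0 < c u}"
    using SpVt_eq_support[OF aia c0 c1 cx] SpVt_eq_support[OF aib c'0 c'1 c'x] by simp
  have pr: "\<forall>u\<in>set \<alpha>. \<forall>u'\<in>set \<alpha>. padd u t \<in> set \<beta> \<longrightarrow> padd u' t \<in> set \<beta> \<longrightarrow>
               (prec \<alpha> u u' \<longleftrightarrow> prec \<beta> (padd u t) (padd u' t))"
    using X_prec_translate[OF a(1) b(1) _ _ Lt] by blast
  have x': "comb c' (set \<beta>) = padd (comb c (set \<alpha>)) t" using xx cx c'x by simp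
  have TT: "T = ext p t (of_int n)" unfolding t_def ext_def using Tp by (simp add: fun_eq_iff)
  have z': "y' p + \<omega> (y'(p:=0)) = (y p + \<omega> (y(p:=0))) + \<omega> t + of_int n"
    unfolding xx linear_form_padd[OF linear] using yy Tp by (simp add: padd_def)
  have "SpVt (Ysimp p \<omega> \<beta> v' l') y' = lift_support p \<omega> \<beta> c' ((y p + \<omega> (y(p:=0))) + \<omega> t + of_int n)"
    using sv' z' by simp
  also have "\<dots> = (\<lambda>w. padd w (ext p t (of_int n))) ` lift_support p \<omega> \<alpha> c (y p + \<omega> (y(p:=0)))"
    by (rule lift_support_translate[OF linear spa lattice_in_space[OF Lt] aib c0 c1 c'0 c'1 x' FF pr])
  finally show ?thesis using sv TT by simp
qed

lemma Y_SpVt_translate: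
  assumes g: "\<gamma> \<in> set Y" "\<gamma>' \<in> set Y" and y: "y \<in> chull (set \<gamma>)" "y' \<in> chull (set \<gamma>')"
    and LT: "L' T" and yy: "y' = padd y T"
  shows "SpVt \<gamma>' y' = (\<lambda>w. padd w T) ` SpVt \<gamma> y"
proof -
  obtain \<alpha> v l where a: "\<alpha> \<in> set X" "v \<in> set \<alpha>" "\<gamma> = Ysimp p \<omega> \<alpha> v l" using mem_Y[OF g(1)] by metis
  obtain \<beta> v' l' where b: "\<beta> \<in> set X" "v' \<in> set \<beta>" "\<gamma>' = Ysimp p \<omega> \<beta> v' l'" using mem_Y[OF g(2)] by metis
  obtain m :: int where Tp: "T p = of_int ((M2 - M1) * m)" and LT0: "L (T(p:=0))"
    using LT unfolding lift_lattice_def by auto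
  show ?thesis using SpVt_Ysimp_translate[OF a(1,2) b(1,2) _ _ LT0 Tp yy] y a(3) b(3) by simp
qed

lemma Y_ordered: "ordered_complex (Suc p) Y"
  unfolding ordered_complex_def
proof
  fix \<gamma> assume "\<gamma> \<in> set Y"
  then obtain \<alpha> v l where a: "\<alpha> \<in> set X" "v \<in> set \<alpha>" "\<gamma> = Ysimp p \<omega> \<alpha> v l" by (metis mem_Y)
  interpret Y_simplex p \<omega> \<alpha> v l by (rule Y_simplex_X[OF a(1,2)])
  show "distinct \<gamma> \<and> length \<gamma> = Suc p + 1 \<and> (\<forall>v\<in>set \<gamma>. in_space (Suc p) v) \<and> aff_indep (set \<gamma>)"
    using distinct_Ysimp length_Ysimp Ysimp_in_space aff_indep_Ysimp X_simplex[OF a(1)] a(3) by simp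
qed

lemma Y_chull_Int:
  assumes g: "\<gamma> \<in> set Y" "\<gamma>' \<in> set Y"
  shows "chull (set \<gamma>) \<inter> chull (set \<gamma>') = {} \<or> chull (set \<gamma>) \<inter> chull (set \<gamma>') = chull (set \<gamma> \<inter> set \<gamma>')"
proof (rule chull_Int_eq_if_SpVt_eq)
  show "aff_indep (set \<gamma>)" "aff_indep (set \<gamma>')" using Y_ordered g unfolding ordered_complex_def by blast+
  have "L' (\<lambda>_. 0)" using lattice_zero by (simp add: lift_lattice_def zero_fun_upd)
  thus "SpVt \<gamma> y = SpVt \<gamma>' y" if "y \<in> chull (set \<gamma>)" "y \<in> chull (set \<gamma>')" for y
    using Y_SpVt_translate[OF g that] by (simp add: padd_zero)
qed

lemma Y_prec_consistent:
  assumes g: "\<gamma> \<in> set Y" "\<gamma>' \<in> set Y" and w: "w \<in> set \<gamma> \<inter> set \<gamma>'" and w': "w' \<in> set \<gamma> \<inter> set \<gamma>'"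
  shows "prec \<gamma> w w' \<longleftrightarrow> prec \<gamma>' w w'"
proof -
  obtain \<alpha> v l where a: "\<alpha> \<in> set X" "v \<in> set \<alpha>" "\<gamma> = Ysimp p \<omega> \<alpha> v l" using mem_Y[OF g(1)] by metis
  obtain \<beta> v' l' where b: "\<beta> \<in> set X" "v' \<in> set \<beta>" "\<gamma>' = Ysimp p \<omega> \<beta> v' l'" using mem_Y[OF g(2)] by metis
  interpret Ya: Y_simplex p \<omega> \<alpha> v l by (rule Y_simplex_X[OF a(1,2)])
  interpret Yb: Y_simplex p \<omega> \<beta> v' l' by (rule Y_simplex_X[OF b(1,2)])
  have pa: "prec \<gamma> w w' \<longleftrightarrow> prec \<alpha> (w(p:=0)) (w'(p:=0)) \<or> (w(p:=0) = w'(p:=0) \<and> w' p < w p)"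
    using Ya.prec_Ysimp w w' a(3) X_simplex(1)[OF a(1)] by simp
  have pb: "prec \<gamma>' w w' \<longleftrightarrow> prec \<beta> (w(p:=0)) (w'(p:=0)) \<or> (w(p:=0) = w'(p:=0) \<and> w' p < w p)"
    using Yb.prec_Ysimp w w' b(3) X_simplex(1)[OF b(1)] by simp
  have "w(p:=0) \<in> set \<alpha> \<inter> set \<beta>" "w'(p:=0) \<in> set \<alpha> \<inter> set \<beta>"
    using Ya.Ysimp_vertex Yb.Ysimp_vertex w w' a(3) b(3) by force+
  thus ?thesis using pa pb X_prec_consistent[OF a(1) b(1)] by simp
qed

lemma Y_prec_translate:
  assumes g: "\<gamma> \<in> set Y" "\<gamma>' \<in> set Y" and w: "w \<in> set \<gamma>" and w': "w' \<in> set \<gamma>"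
    and LT: "L' T" and wT: "padd w T \<in> set \<gamma>'" and w'T: "padd w' T \<in> set \<gamma>'"
  shows "prec \<gamma> w w' \<longleftrightarrow> prec \<gamma>' (padd w T) (padd w' T)"
proof -
  obtain \<alpha> v l where a: "\<alpha> \<in> set X" "v \<in> set \<alpha>" "\<gamma> = Ysimp p \<omega> \<alpha> v l" using mem_Y[OF g(1)] by metis
  obtain \<beta> v' l' where b: "\<beta> \<in> set X" "v' \<in> set \<beta>" "\<gamma>' = Ysimp p \<omega> \<beta> v' l'" using mem_Y[OF g(2)] by metis
  interpret Ya: Y_simplex p \<omega> \<alpha> v l by (rule Y_simplex_X[OF a(1,2)])
  interpret Yb: Y_simplex p \<omega> \<beta> v' l' by (rule Y_simplex_X[OF b(1,2)])
  define t where "t = T(p:=0)"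
  have Lt: "L t" using LT unfolding t_def lift_lattice_def by simp
  have pp: "(padd x T)(p:=0) = padd (x(p:=0)) t" for x unfolding t_def padd_def by (simp add: fun_eq_iff)
  have pa: "prec \<gamma> w w' \<longleftrightarrow> prec \<alpha> (w(p:=0)) (w'(p:=0)) \<or> (w(p:=0) = w'(p:=0) \<and> w' p < w p)"
    using Ya.prec_Ysimp w w' a(3) X_simplex(1)[OF a(1)] by simp
  have pb: "prec \<gamma>' (padd w T) (padd w' T) \<longleftrightarrow> prec \<beta> (padd (w(p:=0)) t) (padd (w'(p:=0)) t) \<or>
      (padd (w(p:=0)) t = padd (w'(p:=0)) t \<and> w' p + T p < w p + T p)"
    using Yb.prec_Ysimp[of "padd w T" "padd w' T"] wT w'T b(3) X_simplex(1)[OF b(1)]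
    unfolding pp by (simp add: padd_def)
  have m1: "w(p:=0) \<in> set \<alpha>" "w'(p:=0) \<in> set \<alpha>" using Ya.Ysimp_vertex w w' a(3) by force+
  have m2: "padd (w(p:=0)) t \<in> set \<beta>" "padd (w'(p:=0)) t \<in> set \<beta>"
    using Yb.Ysimp_vertex[of "padd w T"] Yb.Ysimp_vertex[of "padd w' T"] wT w'T b(3) unfolding pp by force+
  have "padd (w(p:=0)) t = padd (w'(p:=0)) t \<longleftrightarrow> w(p:=0) = w'(p:=0)"
    unfolding padd_def fun_eq_iff by auto
  thus ?thesis using pa pb X_prec_translate[OF a(1) b(1) m1 Lt m2] by simp
qed

lemma Y_covers:
  assumes ysp: "in_space (Suc p) y"
  shows "\<exists>\<gamma>\<in>set Y. \<exists>x\<in>chull (set \<gamma>). L' (psub y x)"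
proof -
  have "in_space p (y(p:=0))" using ysp unfolding in_space_def by auto
  then obtain \<alpha> x where a: "\<alpha> \<in> set X" and xa: "x \<in> chull (set \<alpha>)" and Lx: "L (psub (y(p:=0)) x)"
    using X_covers by blast
  obtain c where c0: "\<forall>u\<in>set \<alpha>. 0 \<le> c u" and c1: "sum c (set \<alpha>) = 1" and cx: "x = comb c (set \<alpha>)"
    using xa unfolding chull_def by blast
  have xsp: "in_space p x" using cx in_space_comb X_simplex(3)[OF a] by auto
  define g where "g = (\<Sum>u\<in>set \<alpha>. c u * afun \<omega> u)"
  obtain m l \<sigma> where lr: "M1 \<le> l" "l < M2" and \<sigma>: "0 \<le> \<sigma>" "\<sigma> < 1"
    and hv: "y p - g = of_int (M2 - M1) * of_int m + of_int l - 1 + \<sigma>"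
    using ex_level_decomposition[OF levels] by blast
  obtain v where v: "v \<in> set \<alpha>" "weight_below \<omega> \<alpha> c v \<le> \<sigma>" "\<sigma> \<le> weight_upto \<omega> \<alpha> c v"
    using ex_pivot[OF c0 c1 \<sigma>] by blast
  interpret Y_simplex p \<omega> \<alpha> v l by (rule Y_simplex_X[OF a v(1)])
  define x' where "x' = ext p x (y p - of_int (M2 - M1) * of_int m)"
  have "y p - of_int (M2 - M1) * of_int m = g + of_int l - 1 + \<sigma>" using hv by simp
  hence "x' \<in> chull (set (Ysimp p \<omega> \<alpha> v l))"
    using lift_in_chull_Ysimp[OF c0 c1 v(2,3)] cx unfolding g_def x'_def by simp
  moreover have "Ysimp p \<omega> \<alpha> v l \<in> set Y" unfolding set_Ycx using a v(1) lr by blast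
  moreover have "(psub y x')(p:=0) = psub (y(p:=0)) x"
    unfolding x'_def psub_def ext_def fun_eq_iff using xsp by (auto simp: in_space_def)
  hence "L' (psub y x')" using Lx unfolding lift_lattice_def by (simp add: x'_def psub_def)
  ultimately show ?thesis by blast
qed

lemma Y_open_height:
  assumes "\<gamma> \<in> set Y" "y \<in> open_simplex (set \<gamma>)"
  obtains \<alpha> c l where "\<alpha> \<in> set X" "M1 \<le> l" "l < M2" "\<forall>u\<in>set \<alpha>. 0 < c u" "sum c (set \<alpha>) = 1"
    "y(p:=0) = comb c (set \<alpha>)"
    "of_int l - 1 < y p - (\<Sum>u\<in>set \<alpha>. c u * afun \<omega> u)" "y p - (\<Sum>u\<in>set \<alpha>. c u * afun \<omega> u) < of_int l"
proof -
  obtain \<alpha> v l where a: "\<alpha> \<in> set X" "v \<in> set \<alpha>" "M1 \<le> l" "l < M2" "\<gamma> = Ysimp p \<omega> \<alpha> v l"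
    using mem_Y[OF assms(1)] by metis
  interpret Y_simplex p \<omega> \<alpha> v l by (rule Y_simplex_X[OF a(1,2)])
  obtain c where "\<forall>u\<in>set \<alpha>. 0 < c u" "sum c (set \<alpha>) = 1" "y(p:=0) = comb c (set \<alpha>)"
    "of_int l - 1 < y p - (\<Sum>u\<in>set \<alpha>. c u * afun \<omega> u)" "y p - (\<Sum>u\<in>set \<alpha>. c u * afun \<omega> u) < of_int l"
    using open_simplex_Ysimp assms(2) a(5) by blast
  thus ?thesis using that a(1,3,4) by blast
qed

lemma X_interior_same_simplex:
  assumes a: "\<alpha> \<in> set X" and b: "\<beta> \<in> set X"
    and c: "\<forall>u\<in>set \<alpha>. 0 < c u" "sum c (set \<alpha>) = 1" "x = comb c (set \<alpha>)"
    and c': "\<forall>u\<in>set \<beta>. 0 < c' u" "sum c' (set \<beta>) = 1" "x = comb c' (set \<beta>)"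
  shows "set \<alpha> = set \<beta> \<and> (\<forall>u\<in>set \<alpha>. c u = c' u)"
proof -
  note aia = X_simplex(4)[OF a] and aib = X_simplex(4)[OF b]
  have c0: "\<forall>u\<in>set \<alpha>. 0 \<le> c u" and c'0: "\<forall>u\<in>set \<beta>. 0 \<le> c' u"
    using c(1) c'(1) by (simp_all add: less_imp_le)
  have "x \<in> chull (set \<alpha>)" "x \<in> chull (set \<beta>)" unfolding chull_def using c0 c c'0 c' by blast+
  hence "SpVt \<beta> x = SpVt \<alpha> x" using X_SpVt_translate[OF a b _ _ lattice_zero] by (simp add: padd_zero)
  moreover have "SpVt \<alpha> x = set \<alpha>" using SpVt_eq_support[OF aia c0 c(2,3)] c(1) by auto
  moreover have "SpVt \<beta> x = set \<beta>" using SpVt_eq_support[OF aib c'0 c'(2,3)] c'(1) by auto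
  ultimately have "set \<alpha> = set \<beta>" by simp
  moreover have "c u = c' u" if "u \<in> set \<alpha>" for u
    using aff_indep_coeffs_unique[OF aia, of c c' u] c(2,3) c'(2,3) calculation that by simp
  ultimately show ?thesis by blast
qed

lemma Y_open_inj:
  assumes g: "\<gamma> \<in> set Y" "\<gamma>' \<in> set Y" and y: "y \<in> open_simplex (set \<gamma>)" and y': "y' \<in> open_simplex (set \<gamma>')"
    and LT: "L' (psub y y')"
  shows "y = y'"
proof -
  obtain \<alpha> c l where a: "\<alpha> \<in> set X" "M1 \<le> l" "l < M2"
    and c: "\<forall>u\<in>set \<alpha>. 0 < c u" "sum c (set \<alpha>) = 1" "y(p:=0) = comb c (set \<alpha>)"
    and h: "of_int l - 1 < y p - (\<Sum>u\<in>set \<alpha>. c u * afun \<omega> u)" "y p - (\<Sum>u\<in>set \<alpha>. c u * afun \<omega> u) < of_int l"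
    using Y_open_height[OF g(1) y] .
  obtain \<beta> c' l' where b: "\<beta> \<in> set X" "M1 \<le> l'" "l' < M2"
    and c': "\<forall>u\<in>set \<beta>. 0 < c' u" "sum c' (set \<beta>) = 1" "y'(p:=0) = comb c' (set \<beta>)"
    and h': "of_int l' - 1 < y' p - (\<Sum>u\<in>set \<beta>. c' u * afun \<omega> u)" "y' p - (\<Sum>u\<in>set \<beta>. c' u * afun \<omega> u) < of_int l'"
    using Y_open_height[OF g(2) y'] .
  have "(psub y y')(p:=0) = psub (y(p:=0)) (y'(p:=0))" unfolding psub_def by (simp add: fun_eq_iff)
  hence "L (psub (y(p:=0)) (y'(p:=0)))" using LT unfolding lift_lattice_def by simp
  moreover have "y(p:=0) \<in> open_simplex (set \<alpha>)" "y'(p:=0) \<in> open_simplex (set \<beta>)"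
    unfolding open_simplex_def using c c' by blast+
  ultimately have xeq: "y(p:=0) = y'(p:=0)" using X_open_inj a(1) b(1) by blast
  have "set \<alpha> = set \<beta> \<and> (\<forall>u\<in>set \<alpha>. c u = c' u)"
    by (rule X_interior_same_simplex[OF a(1) b(1) c(1,2) _ c'(1,2)]) (use c(3) c'(3) xeq in simp_all)
  hence "(\<Sum>u\<in>set \<alpha>. c u * afun \<omega> u) = (\<Sum>u\<in>set \<beta>. c' u * afun \<omega> u)"
    by (metis (no_types, lifting) sum.cong)
  hence close: "\<bar>y p - y' p\<bar> < of_int (M2 - M1)" using h h' a(2,3) b(2,3) by linarith
  obtain m :: int where m: "y p - y' p = of_int (M2 - M1) * of_int m"
    using LT unfolding lift_lattice_def psub_def by auto
  have "\<bar>of_int m\<bar> * of_int (M2 - M1) < (1::real) * of_int (M2 - M1)"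
    using close levels unfolding m by (simp add: abs_mult)
  hence "m = 0" using levels by (simp only: mult_less_cancel_right) linarith
  hence "y p = y' p" using m by simp
  show "y = y'"
  proof
    fix i show "y i = y' i" using fun_cong[OF xeq, of i] \<open>y p = y' p\<close> by (cases "i = p") simp_all
  qed
qed

theorem Lambda_complex_Y: "Lambda_complex (Suc p) L' Y"
  unfolding Lambda_complex_def
proof (intro conjI)
  show "ordered_complex (Suc p) Y" by (rule Y_ordered)
  show "\<forall>\<alpha>\<in>set Y. \<forall>\<beta>\<in>set Y. chull (set \<alpha>) \<inter> chull (set \<beta>) = {} \<or>
          chull (set \<alpha>) \<inter> chull (set \<beta>) = chull (set \<alpha> \<inter> set \<beta>)"
    using Y_chull_Int by blast
  show "\<forall>\<alpha>\<in>set Y. \<forall>\<beta>\<in>set Y. \<forall>v\<in>set \<alpha> \<inter> set \<beta>. \<forall>w\<in>set \<alpha> \<inter> set \<beta>.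
          prec \<alpha> v w \<longleftrightarrow> prec \<beta> v w"
    using Y_prec_consistent by blast
  show "\<forall>\<alpha>\<in>set Y. \<forall>\<alpha>'\<in>set Y. \<forall>v\<in>set \<alpha>. \<forall>w\<in>set \<alpha>. \<forall>t. L' t \<longrightarrow>
          padd v t \<in> set \<alpha>' \<longrightarrow> padd w t \<in> set \<alpha>' \<longrightarrow>
          (prec \<alpha> v w \<longleftrightarrow> prec \<alpha>' (padd v t) (padd w t))"
    using Y_prec_translate by blast
  show "\<forall>y. in_space (Suc p) y \<longrightarrow> (\<exists>\<alpha>\<in>set Y. \<exists>x\<in>chull (set \<alpha>). L' (psub y x))"
    using Y_covers by blast
  show "\<forall>\<alpha>\<in>set Y. \<forall>\<beta>\<in>set Y. \<forall>x\<in>open_simplex (set \<alpha>). \<forall>y\<in>open_simplex (set \<beta>).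
          L' (psub x y) \<longrightarrow> x = y"
    using Y_open_inj by blast
  show "\<forall>\<alpha>\<in>set Y. \<forall>\<alpha>'\<in>set Y. \<forall>x\<in>chull (set \<alpha>). \<forall>x'\<in>chull (set \<alpha>'). \<forall>t.
          L' t \<longrightarrow> x' = padd x t \<longrightarrow> SpVt \<alpha>' x' = (\<lambda>v. padd v t) ` SpVt \<alpha> x"
    using Y_SpVt_translate by blast
qed

end

definition lattice_upto :: "nat \<Rightarrow> (nat \<Rightarrow> nat) \<Rightarrow> nat \<Rightarrow> pt \<Rightarrow> bool" where
  "lattice_upto r N j x \<longleftrightarrow> (\<forall>i<j. if i < r then x i \<in> \<int> else (\<exists>m::int. x i = real (N (i - r + 1)) * of_int m))
      \<and> (\<forall>i\<ge>j. x i = 0)"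

definition step_form :: "nat \<Rightarrow> (nat \<Rightarrow> nat) \<Rightarrow> (nat \<Rightarrow> nat \<Rightarrow> complex) \<Rightarrow> nat \<Rightarrow> pt \<Rightarrow> real" where
  "step_form r N e j = (if j < r then (\<lambda>_. 0) else omega_fn r N e (j - r + 1))"
definition step_period :: "nat \<Rightarrow> (nat \<Rightarrow> nat) \<Rightarrow> nat \<Rightarrow> int" where
  "step_period r N j = (if j < r then 1 else int (N (j - r + 1)))"

lemma Xc_Suc_uniform: "Xc r N e (Suc j) = Ycx j (Xc r N e j) (step_form r N e j) 0 (step_period r N j)"
  by (simp add: step_form_def step_period_def)

lemma linear_form_omega_fn: assumes "r \<le> p" shows "linear_form p (omega_fn r N e k)"
proof -
  define w where "w i = (if i < r then real (N k) / (2 * pi) * Arg (e (Suc i) k) else 0)" for i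
  have "omega_fn r N e k x = (\<Sum>i<p. w i * x i)" for x
  proof -
    have "omega_fn r N e k x = real (N k) / (2*pi) * (\<Sum>i<r. x i * Arg (e (Suc i) k))"
      unfolding omega_fn_def by (simp add: sum.atLeast1_atMost_eq atLeast0LessThan)
    also have "\<dots> = (\<Sum>i<r. w i * x i)" unfolding w_def sum_distrib_left by (rule sum.cong) auto
    also have "\<dots> = (\<Sum>i<p. w i * x i)"
      by (rule sum.mono_neutral_left) (use assms in \<open>auto simp: w_def\<close>)
    finally show ?thesis .
  qed
  thus ?thesis unfolding linear_form_def by blast
qed

lemma linear_form_step_form: "linear_form j (step_form r N e j)"
  unfolding step_form_def using linear_form_zero linear_form_omega_fn[of r j] by auto

lemma step_period_pos: assumes "j < r + r2" "\<forall>k\<in>{1..r2}. N k \<ge> 3" shows "0 < step_period r N j"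
proof (cases "j < r")
  case True thus ?thesis by (simp add: step_period_def)
next
  case False
  hence "j - r + 1 \<in> {1..r2}" using assms(1) by auto
  hence "N (j - r + 1) \<ge> 3" using assms(2) by blast
  thus ?thesis using False by (simp add: step_period_def)
qed

lemma lattice_upto_in_space: "lattice_upto r N j t \<Longrightarrow> in_space j t" unfolding lattice_upto_def in_space_def by auto
lemma lattice_upto_zero: "lattice_upto r N j (\<lambda>_. 0)" unfolding lattice_upto_def by auto

lemma lattice_upto_Suc: "lift_lattice j (lattice_upto r N j) (step_period r N j - 0) = lattice_upto r N (Suc j)"
proof
  fix T
  have last: "(if j < r then T j \<in> \<int> else (\<exists>m::int. T j = real (N (j - r + 1)) * of_int m))
        \<longleftrightarrow> (\<exists>m::int. T j = of_int (step_period r N j - 0) * of_int m)"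
    by (auto simp: step_period_def elim!: Ints_cases)
  show "lift_lattice j (lattice_upto r N j) (step_period r N j - 0) T = lattice_upto r N (Suc j) T"
    unfolding lattice_upto_def lift_lattice_def last[symmetric] by (auto simp: less_Suc_eq)
qed

lemma lattice_upto_LamK: "lattice_upto r N (r + r2) = LamK r r2 N"
proof (rule ext)
  fix x
  have a: "(\<forall>i<r + r2. if i < r then x i \<in> \<int> else (\<exists>m::int. x i = real (N (i - r + 1)) * of_int m))
     \<longleftrightarrow> (\<forall>i<r. x i \<in> \<int>) \<and> (\<forall>j\<in>{1..r2}. \<exists>m::int. x (r + j - 1) = real (N j) * of_int m)"
  proof
    assume H: "\<forall>i<r + r2. if i < r then x i \<in> \<int> else (\<exists>m::int. x i = real (N (i - r + 1)) * of_int m)"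
    have "\<forall>j\<in>{1..r2}. \<exists>m::int. x (r + j - 1) = real (N j) * of_int m"
    proof
      fix j assume j: "j \<in> {1..r2}"
      have "r + j - 1 < r + r2" "\<not> r + j - 1 < r" "r + j - 1 - r + 1 = j" using j by auto
      thus "\<exists>m::int. x (r + j - 1) = real (N j) * of_int m" using H by metis
    qed
    moreover have "\<forall>i<r. x i \<in> \<int>" using H by auto
    ultimately show "(\<forall>i<r. x i \<in> \<int>) \<and> (\<forall>j\<in>{1..r2}. \<exists>m::int. x (r + j - 1) = real (N j) * of_int m)" by blast
  next
    assume H: "(\<forall>i<r. x i \<in> \<int>) \<and> (\<forall>j\<in>{1..r2}. \<exists>m::int. x (r + j - 1) = real (N j) * of_int m)"
    show "\<forall>i<r + r2. if i < r then x i \<in> \<int> else (\<exists>m::int. x i = real (N (i - r + 1)) * of_int m)"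
    proof (intro allI impI)
      fix i assume i: "i < r + r2"
      show "if i < r then x i \<in> \<int> else (\<exists>m::int. x i = real (N (i - r + 1)) * of_int m)"
      proof (cases "i < r")
        case True thus ?thesis using H by simp
      next
        case False
        hence j: "i - r + 1 \<in> {1..r2}" "r + (i - r + 1) - 1 = i" using i by auto
        thus ?thesis using H False by metis
      qed
    qed
  qed
  show "lattice_upto r N (r + r2) x = LamK r r2 N x" unfolding lattice_upto_def LamK_def a by simp
qed

lemma chull_zero: "chull {(\<lambda>_. 0) :: pt} = {\<lambda>_. 0}"
proof
  show "chull {(\<lambda>_. 0) :: pt} \<subseteq> {\<lambda>_. 0}" unfolding chull_def comb_def by auto
  have "(\<lambda>_. 0) = comb (\<lambda>_. 1) {(\<lambda>_. 0) :: pt}" unfolding comb_def by simp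
  thus "{\<lambda>_. 0} \<subseteq> chull {(\<lambda>_. 0) :: pt}" unfolding chull_def by auto
qed

lemma open_simplex_zero: "open_simplex {(\<lambda>_. 0) :: pt} \<subseteq> {\<lambda>_. 0}"
  unfolding open_simplex_def comb_def by auto

lemma aff_indep_zero: "aff_indep {(\<lambda>_. 0) :: pt}" unfolding aff_indep_def by simp

lemma SpVt_zero: "SpVt [(\<lambda>_. 0)] (\<lambda>_. 0) = {\<lambda>_. 0}"
proof -
  have "SpVt [(\<lambda>_. 0)] (\<lambda>_. 0) = {v\<in>set [(\<lambda>_. 0)]. 0 < (\<lambda>_. 1::real) v}"
    by (rule SpVt_eq_support) (auto simp: aff_indep_zero comb_def)
  thus ?thesis by simp
qed

lemma Lambda_complex_point: "Lambda_complex 0 (lattice_upto r N 0) [[(\<lambda>_. 0)]]"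
proof -
  have L0: "lattice_upto r N 0 x \<longleftrightarrow> x = (\<lambda>_. 0)" for x unfolding lattice_upto_def by (auto simp: fun_eq_iff)
  have oc: "ordered_complex 0 [[(\<lambda>_. 0)]]" unfolding ordered_complex_def in_space_def using aff_indep_zero by simp
  have p3: "\<forall>\<alpha>\<in>set [[(\<lambda>_. 0)]]. \<forall>\<alpha>'\<in>set [[(\<lambda>_. 0)]]. \<forall>v\<in>set \<alpha>. \<forall>w\<in>set \<alpha>. \<forall>t. lattice_upto r N 0 t \<longrightarrow>
          padd v t \<in> set \<alpha>' \<longrightarrow> padd w t \<in> set \<alpha>' \<longrightarrow>
          (prec \<alpha> v w \<longleftrightarrow> prec \<alpha>' (padd v t) (padd w t))" by (simp add: prec_irrefl)
  have p4a: "\<forall>y. in_space 0 y \<longrightarrow> (\<exists>\<alpha>\<in>set [[(\<lambda>_. 0)]]. \<exists>x\<in>chull (set \<alpha>). lattice_upto r N 0 (psub y x))"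
  proof (intro allI impI)
    fix y :: pt assume "in_space 0 y"
    hence "y = (\<lambda>_. 0)" unfolding in_space_def by auto
    hence "lattice_upto r N 0 (psub y (\<lambda>_. 0))" unfolding L0 psub_def by simp
    thus "\<exists>\<alpha>\<in>set [[(\<lambda>_. 0)]]. \<exists>x\<in>chull (set \<alpha>). lattice_upto r N 0 (psub y x)" using chull_zero by auto
  qed
  have p4b: "\<forall>\<alpha>\<in>set [[(\<lambda>_. 0)]]. \<forall>\<beta>\<in>set [[(\<lambda>_. 0)]]. \<forall>x\<in>open_simplex (set \<alpha>). \<forall>y\<in>open_simplex (set \<beta>).
          lattice_upto r N 0 (psub x y) \<longrightarrow> x = y" using open_simplex_zero by auto
  have p5: "\<forall>\<alpha>\<in>set [[(\<lambda>_. 0)]]. \<forall>\<alpha>'\<in>set [[(\<lambda>_. 0)]]. \<forall>x\<in>chull (set \<alpha>). \<forall>x'\<in>chull (set \<alpha>'). \<forall>t.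
          lattice_upto r N 0 t \<longrightarrow> x' = padd x t \<longrightarrow> SpVt \<alpha>' x' = (\<lambda>v. padd v t) ` SpVt \<alpha> x"
  proof (intro ballI allI impI)
    fix \<alpha> \<alpha>' x x' t assume a: "\<alpha> \<in> set [[(\<lambda>_. 0)]]" "\<alpha>' \<in> set [[(\<lambda>_. 0)]]"
      and x: "x \<in> chull (set \<alpha>)" "x' \<in> chull (set \<alpha>')" and "lattice_upto r N 0 t" and "x' = padd x t"
    hence "t = (\<lambda>_. 0)" using L0 by blast
    thus "SpVt \<alpha>' x' = (\<lambda>v. padd v t) ` SpVt \<alpha> x" using a x chull_zero SpVt_zero padd_zero by auto
  qed
  show ?thesis unfolding Lambda_complex_def using oc p3 p4a p4b p5 by auto
qed

lemma length_Ycx: "\<forall>\<alpha>\<in>set X. length \<alpha> = k \<Longrightarrow> length (Ycx p X \<omega> M1 M2) = length X * k * nat (M2 - M1)"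
proof (induction X)
  case Nil thus ?case by (simp add: Ycx_def)
next
  case (Cons \<alpha> X)
  have "length (concat (map (\<lambda>v. map (\<lambda>l. Ysimp p \<omega> \<alpha> v l) [M1..M2 - 1]) \<alpha>)) = length \<alpha> * nat (M2 - M1)"
    by (simp add: length_concat o_def sum_list_triv)
  moreover have "length (Ycx p X \<omega> M1 M2) = length X * k * nat (M2 - M1)" using Cons by simp
  moreover have "Ycx p (\<alpha> # X) \<omega> M1 M2 = concat (map (\<lambda>v. map (\<lambda>l. Ysimp p \<omega> \<alpha> v l) [M1..M2 - 1]) \<alpha>) @ Ycx p X \<omega> M1 M2"
    by (simp add: Ycx_def)
  ultimately show ?case using Cons.prems by (simp add: algebra_simps)
qed

lemma Omega_eq: "Omega r N e jj \<kappa> = \<kappa> (r + jj - 1) + omega_fn r N e jj \<kappa>"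
  by (simp add: Omega_def omega_fn_def)

lemma Omega_comb:
  assumes "sum c S = 1"
  shows "Omega r N e jj (comb c S) = (\<Sum>w\<in>S. c w * Omega r N e jj w)"
proof -
  have "omega_fn r N e jj (comb c S) = (\<Sum>w\<in>S. c w * omega_fn r N e jj w)"
    by (rule linear_form_comb[OF linear_form_omega_fn[of r r]]) simp
  thus ?thesis using assms unfolding Omega_eq comb_def by (simp add: distrib_left sum.distrib)
qed

lemma convex_comb_bounds:
  fixes f c :: "'a \<Rightarrow> real"
  assumes "\<forall>w\<in>S. 0 \<le> c w" "sum c S = 1" "\<forall>w\<in>S. a \<le> f w \<and> f w \<le> b"
  shows "a \<le> (\<Sum>w\<in>S. c w * f w) \<and> (\<Sum>w\<in>S. c w * f w) \<le> b"
proof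
  have "(\<Sum>w\<in>S. c w * a) \<le> (\<Sum>w\<in>S. c w * f w)"
    by (rule sum_mono) (use assms in \<open>simp add: mult_left_mono\<close>)
  thus "a \<le> (\<Sum>w\<in>S. c w * f w)" using assms(2) by (simp add: sum_distrib_right[symmetric])
  have "(\<Sum>w\<in>S. c w * f w) \<le> (\<Sum>w\<in>S. c w * b)"
    by (rule sum_mono) (use assms in \<open>simp add: mult_left_mono\<close>)
  thus "(\<Sum>w\<in>S. c w * f w) \<le> b" using assms(2) by (simp add: sum_distrib_right[symmetric])
qed

context
  fixes r r2 :: nat and N :: "nat \<Rightarrow> nat" and e :: "nat \<Rightarrow> nat \<Rightarrow> complex"
  assumes N3: "\<forall>k\<in>{1..r2}. N k \<ge> 3"
begin

lemma Lambda_complex_Xc: "j \<le> r + r2 \<Longrightarrow> Lambda_complex j (lattice_upto r N j) (Xc r N e j)"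
proof (induction j)
  case 0 thus ?case using Lambda_complex_point by simp
next
  case (Suc j)
  interpret Y_step j "lattice_upto r N j" "Xc r N e j" "step_form r N e j" 0 "step_period r N j"
    using Suc step_period_pos[of j r r2 N] N3
    by unfold_locales (auto intro: lattice_upto_in_space lattice_upto_zero linear_form_step_form)
  show ?case using Lambda_complex_Y unfolding lattice_upto_Suc Xc_Suc_uniform .
qed

lemma Xc_simplex:
  assumes "j \<le> r + r2" "\<alpha> \<in> set (Xc r N e j)"
  shows "length \<alpha> = j + 1" "\<forall>u\<in>set \<alpha>. in_space j u" "aff_indep (set \<alpha>)"
proof -
  have "ordered_complex j (Xc r N e j)"
    using Lambda_complex_Xc[OF assms(1)] unfolding Lambda_complex_def by (elim conjE)
  thus "length \<alpha> = j + 1" "\<forall>u\<in>set \<alpha>. in_space j u" "aff_indep (set \<alpha>)"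
    using assms(2) unfolding ordered_complex_def by auto
qed

lemma Y_simplex_Xc: "j \<le> r + r2 \<Longrightarrow> \<alpha> \<in> set (Xc r N e j) \<Longrightarrow> v \<in> set \<alpha> \<Longrightarrow> Y_simplex j (step_form r N e j) \<alpha> v"
  using Xc_simplex linear_form_step_form by unfold_locales auto

lemma mem_Xc_Suc:
  assumes "\<gamma> \<in> set (Xc r N e (Suc j))"
  obtains \<alpha> v l where "\<alpha> \<in> set (Xc r N e j)" "v \<in> set \<alpha>" "\<gamma> = Ysimp j (step_form r N e j) \<alpha> v l"
  using assms unfolding Xc_Suc_uniform set_Ycx by blast

lemma Xc_vertices_Ints: "j \<le> r + r2 \<Longrightarrow> \<forall>\<alpha>\<in>set (Xc r N e j). \<forall>v\<in>set \<alpha>. \<forall>i. v i \<in> \<int>"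
proof (induction j)
  case 0 thus ?case by simp
next
  case (Suc j)
  show ?case
  proof (intro ballI allI)
    fix \<gamma> w i assume g: "\<gamma> \<in> set (Xc r N e (Suc j))" and w: "w \<in> set \<gamma>"
    obtain \<alpha> v l where a: "\<alpha> \<in> set (Xc r N e j)" "v \<in> set \<alpha>" "\<gamma> = Ysimp j (step_form r N e j) \<alpha> v l"
      using mem_Xc_Suc[OF g] by metis
    interpret Y_simplex j "step_form r N e j" \<alpha> v l using Y_simplex_Xc Suc.prems a by simp
    obtain u where u: "u \<in> set \<alpha>" "w = ext j u (w j)" "w j \<in> \<int>" using Ysimp_vertex w a(3) by blast
    have "\<forall>i. u i \<in> \<int>" using Suc a u by simp
    thus "w i \<in> \<int>" using u by (cases "i = j") (simp, metis ext_other)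
  qed
qed

lemma length_Xc: "j \<le> r + r2 \<Longrightarrow> length (Xc r N e j) = fact j * (\<Prod>k\<in>{1..j - r}. N k)"
proof (induction j)
  case 0 thus ?case by simp
next
  case (Suc j)
  have "length (Xc r N e (Suc j)) = length (Xc r N e j) * (j + 1) * nat (step_period r N j - 0)"
    unfolding Xc_Suc_uniform using Xc_simplex(1) Suc.prems by (intro length_Ycx) simp
  also have "\<dots> = fact (Suc j) * (\<Prod>k\<in>{1..Suc j - r}. N k)"
  proof (cases "j < r")
    case True
    thus ?thesis using Suc by (simp add: step_period_def algebra_simps)
  next
    case False
    hence "Suc j - r = Suc (j - r)" by simp
    moreover have "(\<Prod>k\<in>{1..Suc (j - r)}. N k) = (\<Prod>k\<in>{1..j - r}. N k) * N (Suc (j - r))"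
      by (simp add: prod.nat_ivl_Suc')
    ultimately show ?thesis using Suc False by (simp add: step_period_def algebra_simps)
  qed
  finally show ?case .
qed

lemma Omega_ext:
  assumes "r + jj - 1 < q" "r \<le> q"
  shows "Omega r N e jj (ext q u h) = Omega r N e jj u"
proof -
  have "omega_fn r N e jj (ext q u h) = omega_fn r N e jj u"
    unfolding ext_def by (rule linear_form_fun_upd[OF linear_form_omega_fn[of r r]]) (use assms in auto)
  moreover have "ext q u h (r + jj - 1) = u (r + jj - 1)" using assms(1) by simp
  ultimately show ?thesis unfolding Omega_eq by simp
qed

lemma Xc_Omega_bounded:
  assumes jj: "jj \<in> {1..r2}" and j: "r + jj \<le> j" "j \<le> r + r2" and \<gamma>: "\<gamma> \<in> set (Xc r N e j)"
  shows "\<exists>a. \<forall>w\<in>set \<gamma>. a \<le> Omega r N e jj w \<and> Omega r N e jj w \<le> a + 1"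
  using j \<gamma>
proof (induction j arbitrary: \<gamma> rule: dec_induct)
  case base
  define q where "q = r + jj - 1"
  have q: "r + jj = Suc q" "r \<le> q" using jj unfolding q_def by auto
  obtain \<alpha> v l where a: "\<alpha> \<in> set (Xc r N e q)" "v \<in> set \<alpha>" "\<gamma> = Ysimp q (step_form r N e q) \<alpha> v l"
    using mem_Xc_Suc base.prems(2) q(1) by metis
  interpret Y_simplex q "step_form r N e q" \<alpha> v l using Y_simplex_Xc base.prems(1) a q by simp
  have "Omega r N e jj w = w q + step_form r N e q (w(q:=0))" for w
  proof -
    have "omega_fn r N e jj (w(q:=0)) = omega_fn r N e jj w"
      by (rule linear_form_fun_upd[OF linear_form_omega_fn[of r q]]) (use q in auto)
    moreover have "step_form r N e q = omega_fn r N e jj" unfolding step_form_def q_def using jj by auto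
    ultimately show ?thesis unfolding Omega_eq q_def by simp
  qed
  thus ?case using Ysimp_height_window a(3)
    by (intro exI[of _ "Afun (step_form r N e q) v + of_int l - 1"]) auto
next
  case (step q)
  obtain \<alpha> v l where a: "\<alpha> \<in> set (Xc r N e q)" "v \<in> set \<alpha>" "\<gamma> = Ysimp q (step_form r N e q) \<alpha> v l"
    using mem_Xc_Suc step.prems(2) by metis
  interpret Y_simplex q "step_form r N e q" \<alpha> v l using Y_simplex_Xc step a by simp
  obtain b where b: "\<forall>w\<in>set \<alpha>. b \<le> Omega r N e jj w \<and> Omega r N e jj w \<le> b + 1"
    using step a by auto
  have q: "r + jj - 1 < q" "r \<le> q" using step.hyps(1) jj by auto
  have "w(q:=0) \<in> set \<alpha> \<and> Omega r N e jj w = Omega r N e jj (w(q:=0))" if w: "w \<in> set \<gamma>" for w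
  proof -
    obtain u where "u \<in> set \<alpha>" "w = ext q u (w q)" "w(q:=0) = u" using Ysimp_vertex w a(3) by blast
    thus ?thesis using Omega_ext[OF q, of u "w q"] by simp
  qed
  thus ?case using b by (intro exI[of _ b]) fastforce
qed

lemma Xc_Omega_bounded_chull:
  assumes "jj \<in> {1..r2}" "\<alpha> \<in> set (Xc r N e (r + r2))"
  shows "\<exists>a. \<forall>\<kappa>\<in>chull (set \<alpha>). a \<le> Omega r N e jj \<kappa> \<and> Omega r N e jj \<kappa> \<le> a + 1"
proof -
  obtain a where a: "\<forall>w\<in>set \<alpha>. a \<le> Omega r N e jj w \<and> Omega r N e jj w \<le> a + 1"
    using Xc_Omega_bounded[OF assms(1) _ order.refl assms(2)] assms(1) by auto
  have "a \<le> Omega r N e jj \<kappa> \<and> Omega r N e jj \<kappa> \<le> a + 1" if "\<kappa> \<in> chull (set \<alpha>)" for \<kappa>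
    using that convex_comb_bounds[OF _ _ a] Omega_comb unfolding chull_def by auto
  thus ?thesis by blast
qed

end

theorem proposition2:
  fixes r1 r2 :: nat and N :: "nat \<Rightarrow> nat" and e :: "nat \<Rightarrow> nat \<Rightarrow> complex"
  assumes deg: "r1 + r2 \<ge> 1"
    and N3: "\<forall>j\<in>{1..r2}. N j \<ge> 3"
    and e_nz: "\<forall>l\<in>{1..r1 + r2 - 1}. \<forall>j\<in>{1..r2}. e l j \<noteq> 0"
  shows "Lambda_complex (r1 + 2 * r2 - 1) (LamK (r1 + r2 - 1) r2 N) (Xfrak r1 r2 N e)
       \<and> (\<forall>\<alpha>\<in>set (Xfrak r1 r2 N e). \<forall>v\<in>set \<alpha>. \<forall>i. v i \<in> \<int>)
       \<and> length (Xfrak r1 r2 N e) = fact (r1 + 2 * r2 - 1) * (\<Prod>j=1..r2. N j)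
       \<and> (\<forall>j\<in>{1..r2}. \<forall>\<alpha>\<in>set (Xfrak r1 r2 N e). \<exists>a::real.
            \<forall>\<kappa>\<in>chull (set \<alpha>). a \<le> Omega (r1 + r2 - 1) N e j \<kappa> \<and> Omega (r1 + r2 - 1) N e j \<kappa> \<le> a + 1)"
proof -
  define r where "r = r1 + r2 - 1"
  have dim: "r1 + 2 * r2 - 1 = r + r2" using deg unfolding r_def by simp
  have X: "Xfrak r1 r2 N e = Xc r N e (r + r2)" unfolding Xfrak_def r_def dim[unfolded r_def] ..
  have "Lambda_complex (r + r2) (LamK r r2 N) (Xc r N e (r + r2))"
    using Lambda_complex_Xc[OF N3 order.refl] unfolding lattice_upto_LamK .
  moreover have "\<forall>\<alpha>\<in>set (Xc r N e (r + r2)). \<forall>v\<in>set \<alpha>. \<forall>i. v i \<in> \<int>"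
    by (rule Xc_vertices_Ints[OF N3 order.refl])
  moreover have "length (Xc r N e (r + r2)) = fact (r + r2) * (\<Prod>j=1..r2. N j)"
    using length_Xc[OF N3 order.refl] by simp
  moreover have "\<forall>j\<in>{1..r2}. \<forall>\<alpha>\<in>set (Xc r N e (r + r2)). \<exists>a::real.
      \<forall>\<kappa>\<in>chull (set \<alpha>). a \<le> Omega r N e j \<kappa> \<and> Omega r N e j \<kappa> \<le> a + 1"
    using Xc_Omega_bounded_chull[OF N3] by blast
  ultimately show ?thesis unfolding r_def[symmetric] dim X by blast
qed

end
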